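(* Let $\mathcal E$ and $\mathcal E'$ be systems of equations in the Internal $\pi$-calculus such that $\mathcal E'$ extends $\mathcal E$ with respect to $\sqsubseteq_{\mathrm{tr}}$, and suppose $\mathcal E'$ is guarded and its syntactic solution has no divergences. If $\tilde F$ is a post-fixed point for $\sqsubseteq_{\mathrm{tr}}$ of $\mathcal E$ and $\tilde G$ is a pre-fixed point for $\sqsubseteq_{\mathrm{tr}}$ of $\mathcal E$, then $\tilde F\sqsubseteq_{\mathrm{tr}}\tilde G$.
   Context: Internal $\pi$-calculus: polyadic, well-sorted $\pi$-calculus with processes $P ::= 0\mid a(\tilde b).P\mid \overline a(\tilde b).P\mid(\nu a)P\mid P|P\mid\ !a(\tilde b).P\mid F\langle\tilde a\rangle$, abstractions $F::=(\tilde a)P\mid K$ (constants $K\triangleq(\tilde x)P$ with $P$ name-closed); all outputs bound, tuple components pairwise distinct; standard ground labelled transition system. For a sequence $s$ of visible actions $\mu_1,\dots,\mu_n$, $P\overset{s}{\Longrightarrow}$ if $P\overset{\mu_1}{\Longrightarrow}\cdots\overset{\mu_n}{\Longrightarrow}P_n$. $P\sqsubseteq_{\mathrm{tr}}Q$ if $P\overset{s}{\Longrightarrow}$ implies $Q\overset{s}{\Longrightarrow}$ for all $s$; extended to abstractions via fresh names, and to tuples componentwise. A process diverges if it has an infinite sequence of transitions that from some point on are all $\tau$; an abstraction diverges if its application to fresh names does. Expressions are name-closed abstractions possibly containing applications $X\langle\tilde a\rangle$ of equation variables. A system $\{X_i=E_i\}_{i\in I}$ ($I$ countable) is guarded if every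 occurrence of a variable in each $E_i$ is underneath a prefix. $E[\tilde F]$ replaces each $X_i$ by $F_i$. Syntactic solution: constants $K_{\mathcal E,i}\triangleq E_i[\tilde K_{\mathcal E}]$. $\tilde F$ is a pre-fixed point for $\sqsubseteq_{\mathrm{tr}}$ if $E_i[\tilde F]\sqsubseteq_{\mathrm{tr}}F_i$ for all $i$, a post-fixed point if $F_i\sqsubseteq_{\mathrm{tr}}E_i[\tilde F]$ for all $i$. $\mathcal E'$ extends $\mathcal E$ with respect to $\sqsubseteq_{\mathrm{tr}}$ if there is a fixed set of indices $J$ such that (1) every pre-fixed point of $\mathcal E$ for $\sqsubseteq_{\mathrm{tr}}$ can be obtained from a pre-fixed point of $\mathcal E'$ for $\sqsubseteq_{\mathrm{tr}}$ by removing the components with indices in $J$, and (2) the same holds for post-fixed points. *)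

theory Defs
  imports Main
begin

text \<open>
Names are de Bruijn indices (nat).  A binder of a tuple of k names binds the
indices 0..k-1 in its body (the i-th bound name of the tuple is index i);
all other indices are shifted by k.  Since outputs are bound and the bound
tuple is represented by indices, tuple components are automatically pairwise
distinct; for the name tuples of applications distinctness is enforced by the
well-sortedness predicate \<open>wt\<close> below.

\<open>PIn a k P\<close>  = a(b_0..b_{k-1}).P,   \<open>POut a k P\<close> = bound output,
\<open>PRes P\<close> = (nu a)P (a is index 0 in P),  \<open>PRep a k P\<close> = !a(b).P,
\<open>PVar i xs\<close> = equation variable application X_i<xs>,
\<open>PSol E i xs\<close> = constant application K<xs>, where the constant K is the i-th
component of the family of (mutually recursive) constants defined by
K_j := E j  (with occurrences of X_j in the bodies read as K_j); every family
of constant definitions has this form.  An abstraction is a pair (sort list, body),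
the body living in the context of its parameters.
\<close>

datatype 's pr =
    PNil
  | PIn nat nat "'s pr"
  | POut nat nat "'s pr"
  | PRes "'s pr"
  | PPar "'s pr" "'s pr"
  | PRep nat nat "'s pr"
  | PVar nat "nat list"
  | PSol "nat \<Rightarrow> 's list \<times> 's pr" nat "nat list"

type_synonym 's abs = "'s list \<times> 's pr"

definition up :: "nat \<Rightarrow> (nat \<Rightarrow> nat) \<Rightarrow> nat \<Rightarrow> nat" where
  "up k f = (\<lambda>i. if i < k then i else f (i - k) + k)"

primrec ren :: "(nat \<Rightarrow> nat) \<Rightarrow> 's pr \<Rightarrow> 's pr" where
  "ren f PNil = PNil"
| "ren f (PIn a k P) = PIn (f a) k (ren (up k f) P)"
| "ren f (POut a k P) = POut (f a) k (ren (up k f) P)"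
| "ren f (PRes P) = PRes (ren (up 1 f) P)"
| "ren f (PPar P Q) = PPar (ren f P) (ren f Q)"
| "ren f (PRep a k P) = PRep (f a) k (ren (up k f) P)"
| "ren f (PVar i xs) = PVar i (map f xs)"
| "ren f (PSol E i xs) = PSol E i (map f xs)"

text \<open>Replacement of each X_j by the (name-closed) abstraction F j.\<close>
primrec substV :: "(nat \<Rightarrow> 's abs) \<Rightarrow> 's pr \<Rightarrow> 's pr" where
  "substV F PNil = PNil"
| "substV F (PIn a k P) = PIn a k (substV F P)"
| "substV F (POut a k P) = POut a k (substV F P)"
| "substV F (PRes P) = PRes (substV F P)"
| "substV F (PPar P Q) = PPar (substV F P) (substV F Q)"
| "substV F (PRep a k P) = PRep a k (substV F P)"
| "substV F (PVar j xs) = ren (\<lambda>n. xs ! n) (snd (F j))"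
| "substV F (PSol E i xs) = PSol E i xs"

primrec resn :: "nat \<Rightarrow> 's pr \<Rightarrow> 's pr" where
  "resn 0 P = P"
| "resn (Suc k) P = PRes (resn k P)"

definition unfold_sol :: "(nat \<Rightarrow> 's abs) \<Rightarrow> nat \<Rightarrow> nat list \<Rightarrow> 's pr" where
  "unfold_sol E i xs =
     ren (\<lambda>n. xs ! n)
       (substV (\<lambda>j. (fst (E j), PSol E j [0..<length (fst (E j))])) (snd (E i)))"

text \<open>A sorting \<open>ob\<close> assigns to each sort the list of sorts of the tuples
carried by names of that sort.  \<open>vs\<close> gives the sorts of the parameters of the
equation variables; \<open>\<Gamma>\<close> the sorts of the free names (and closedness: every
free index is below \<open>length \<Gamma>\<close>).\<close>

inductive wt :: "('s \<Rightarrow> 's list) \<Rightarrow> (nat \<Rightarrow> 's list option) \<Rightarrow> 's list \<Rightarrow> 's pr \<Rightarrow> bool"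
  for ob where
  wt_nil: "wt ob vs \<Gamma> PNil"
| wt_in: "\<lbrakk>a < length \<Gamma>; length (ob (\<Gamma> ! a)) = k; wt ob vs (ob (\<Gamma> ! a) @ \<Gamma>) P\<rbrakk>
          \<Longrightarrow> wt ob vs \<Gamma> (PIn a k P)"
| wt_out: "\<lbrakk>a < length \<Gamma>; length (ob (\<Gamma> ! a)) = k; wt ob vs (ob (\<Gamma> ! a) @ \<Gamma>) P\<rbrakk>
          \<Longrightarrow> wt ob vs \<Gamma> (POut a k P)"
| wt_rep: "\<lbrakk>a < length \<Gamma>; length (ob (\<Gamma> ! a)) = k; wt ob vs (ob (\<Gamma> ! a) @ \<Gamma>) P\<rbrakk>
          \<Longrightarrow> wt ob vs \<Gamma> (PRep a k P)"
| wt_res: "wt ob vs (s # \<Gamma>) P \<Longrightarrow> wt ob vs \<Gamma> (PRes P)"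
| wt_par: "\<lbrakk>wt ob vs \<Gamma> P; wt ob vs \<Gamma> Q\<rbrakk> \<Longrightarrow> wt ob vs \<Gamma> (PPar P Q)"
| wt_var: "\<lbrakk>\<forall>x\<in>set xs. x < length \<Gamma>; distinct xs; vs i = Some (map (\<lambda>x. \<Gamma> ! x) xs)\<rbrakk>
          \<Longrightarrow> wt ob vs \<Gamma> (PVar i xs)"
| wt_sol: "\<lbrakk>\<forall>j. wt ob (\<lambda>j. Some (fst (E j))) (fst (E j)) (snd (E j));
           \<forall>x\<in>set xs. x < length \<Gamma>; distinct xs; map (\<lambda>x. \<Gamma> ! x) xs = fst (E i)\<rbrakk>
          \<Longrightarrow> wt ob vs \<Gamma> (PSol E i xs)"

text \<open>Labels: \<open>InA a k\<close> = input a(b_0..b_{k-1}) with fresh b, \<open>OutA a k\<close> =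
bound output; the received / emitted fresh names become indices 0..k-1 of the
derivative.\<close>

datatype act = Tau | InA nat nat | OutA nat nat

fun ar :: "act \<Rightarrow> nat" where
  "ar Tau = 0" | "ar (InA a k) = k" | "ar (OutA a k) = k"

definition swp :: "nat \<Rightarrow> nat \<Rightarrow> nat" where
  "swp k i = (if i < k then Suc i else if i = k then 0 else i)"

inductive step :: "'s pr \<Rightarrow> act \<Rightarrow> 's pr \<Rightarrow> bool" where
  s_in: "step (PIn a k P) (InA a k) P"
| s_out: "step (POut a k P) (OutA a k) P"
| s_rep: "step (PRep a k P) (InA a k) (PPar P (ren (\<lambda>i. i + k) (PRep a k P)))"
| s_parl: "step P \<mu> P' \<Longrightarrow> step (PPar P Q) \<mu> (PPar P' (ren (\<lambda>i. i + ar \<mu>) Q))"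
| s_parr: "step Q \<mu> Q' \<Longrightarrow> step (PPar P Q) \<mu> (PPar (ren (\<lambda>i. i + ar \<mu>) P) Q')"
| s_comm1: "\<lbrakk>step P (InA a k) P'; step Q (OutA a k) Q'\<rbrakk>
            \<Longrightarrow> step (PPar P Q) Tau (resn k (PPar P' Q'))"
| s_comm2: "\<lbrakk>step P (OutA a k) P'; step Q (InA a k) Q'\<rbrakk>
            \<Longrightarrow> step (PPar P Q) Tau (resn k (PPar P' Q'))"
| s_res_tau: "step P Tau P' \<Longrightarrow> step (PRes P) Tau (PRes P')"
| s_res_in: "step P (InA (Suc a) k) P' \<Longrightarrow> step (PRes P) (InA a k) (PRes (ren (swp k) P'))"
| s_res_out: "step P (OutA (Suc a) k) P' \<Longrightarrow> step (PRes P) (OutA a k) (PRes (ren (swp k) P'))"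
| s_sol: "step (unfold_sol E i xs) \<mu> P' \<Longrightarrow> step (PSol E i xs) \<mu> P'"

inductive wtr :: "'s pr \<Rightarrow> act list \<Rightarrow> bool" where
  wtr_nil: "wtr P []"
| wtr_tau: "\<lbrakk>step P Tau Q; wtr Q s\<rbrakk> \<Longrightarrow> wtr P s"
| wtr_vis: "\<lbrakk>step P \<mu> Q; \<mu> \<noteq> Tau; wtr Q s\<rbrakk> \<Longrightarrow> wtr P (\<mu> # s)"

definition tr_le :: "'s pr \<Rightarrow> 's pr \<Rightarrow> bool" where
  "tr_le P Q = (\<forall>s. wtr P s \<longrightarrow> wtr Q s)"

text \<open>For abstractions: application to fresh names = the body with its
parameters as (fresh) free names.\<close>
definition abs_le :: "'s abs \<Rightarrow> 's abs \<Rightarrow> bool" where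
  "abs_le F G = (fst F = fst G \<and> tr_le (snd F) (snd G))"

definition diverges :: "'s pr \<Rightarrow> bool" where
  "diverges P = (\<exists>f l. f 0 = P \<and> (\<forall>n. step (f n) (l n) (f (Suc n)))
                     \<and> (\<exists>N. \<forall>n\<ge>N. l n = Tau))"

text \<open>A system is an index set \<open>I\<close> (countable, as a set of naturals) and
\<open>E :: nat \<Rightarrow> 's abs\<close>, the equation X_i = E i for i in I.\<close>

definition vsys :: "nat set \<Rightarrow> (nat \<Rightarrow> 's abs) \<Rightarrow> nat \<Rightarrow> 's list option" where
  "vsys I E j = (if j \<in> I then Some (fst (E j)) else None)"

definition sys_ok :: "('s \<Rightarrow> 's list) \<Rightarrow> nat set \<Rightarrow> (nat \<Rightarrow> 's abs) \<Rightarrow> bool" where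
  "sys_ok ob I E = (\<forall>i\<in>I. wt ob (vsys I E) (fst (E i)) (snd (E i)))"

primrec guarded :: "'s pr \<Rightarrow> bool" where
  "guarded PNil = True"
| "guarded (PIn a k P) = True"
| "guarded (POut a k P) = True"
| "guarded (PRep a k P) = True"
| "guarded (PRes P) = guarded P"
| "guarded (PPar P Q) = (guarded P \<and> guarded Q)"
| "guarded (PVar i xs) = False"
| "guarded (PSol E i xs) = True"

definition guarded_sys :: "nat set \<Rightarrow> (nat \<Rightarrow> 's abs) \<Rightarrow> bool" where
  "guarded_sys I E = (\<forall>i\<in>I. guarded (snd (E i)))"

definition inst :: "(nat \<Rightarrow> 's abs) \<Rightarrow> (nat \<Rightarrow> 's abs) \<Rightarrow> nat \<Rightarrow> 's abs" where
  "inst E F i = (fst (E i), substV F (snd (E i)))"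

definition closed_abs :: "('s \<Rightarrow> 's list) \<Rightarrow> 's abs \<Rightarrow> 's list \<Rightarrow> bool" where
  "closed_abs ob F \<sigma> = (fst F = \<sigma> \<and> wt ob (\<lambda>_. None) \<sigma> (snd F))"

definition pre_fp :: "('s \<Rightarrow> 's list) \<Rightarrow> nat set \<Rightarrow> (nat \<Rightarrow> 's abs) \<Rightarrow> (nat \<Rightarrow> 's abs) \<Rightarrow> bool" where
  "pre_fp ob I E F = (\<forall>i\<in>I. closed_abs ob (F i) (fst (E i)) \<and> abs_le (inst E F i) (F i))"

definition post_fp :: "('s \<Rightarrow> 's list) \<Rightarrow> nat set \<Rightarrow> (nat \<Rightarrow> 's abs) \<Rightarrow> (nat \<Rightarrow> 's abs) \<Rightarrow> bool" where
  "post_fp ob I E F = (\<forall>i\<in>I. closed_abs ob (F i) (fst (E i)) \<and> abs_le (F i) (inst E F i))"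

definition extends_sys :: "('s \<Rightarrow> 's list) \<Rightarrow> nat set \<Rightarrow> (nat \<Rightarrow> 's abs)
     \<Rightarrow> nat set \<Rightarrow> (nat \<Rightarrow> 's abs) \<Rightarrow> bool" where
  "extends_sys ob I E I' E' =
    (\<exists>J. I' - J = I
       \<and> (\<forall>F. pre_fp ob I E F \<longrightarrow> (\<exists>F'. pre_fp ob I' E' F' \<and> (\<forall>i\<in>I. F' i = F i)))
       \<and> (\<forall>F. post_fp ob I E F \<longrightarrow> (\<exists>F'. post_fp ob I' E' F' \<and> (\<forall>i\<in>I. F' i = F i))))"

text \<open>Syntactic solution K_{E,i} (applied to fresh names).\<close>
definition sysfun :: "nat set \<Rightarrow> (nat \<Rightarrow> 's abs) \<Rightarrow> nat \<Rightarrow> 's abs" where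
  "sysfun I E j = (if j \<in> I then E j else ([], PNil))"

definition synsol :: "nat set \<Rightarrow> (nat \<Rightarrow> 's abs) \<Rightarrow> nat \<Rightarrow> 's abs" where
  "synsol I E i = (fst (E i), PSol (sysfun I E) i [0..<length (fst (E i))])"

definition abs_tuple_le :: "nat set \<Rightarrow> (nat \<Rightarrow> 's abs) \<Rightarrow> (nat \<Rightarrow> 's abs) \<Rightarrow> bool" where
  "abs_tuple_le I F G = (\<forall>i\<in>I. abs_le (F i) (G i))"

end

theory Submission
  imports Defs
begin

text \<open>Let \<open>K\<close> be the syntactic solution of the guarded system \<open>E'\<close>, and extend \<open>F\<close> and \<open>G\<close>
  to a post- and a pre-fixed point of \<open>E'\<close>; it suffices to show \<open>F \<sqsubseteq> K \<sqsubseteq> G\<close>.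
  Because of guardedness every transition of an instance \<open>T[H]\<close> of an expression is a
  transition of \<open>T\<close> itself, the same for every \<open>H\<close>, and since the trace preorder is a precongruence,
  unfolding the unguarded variables of \<open>T\<close> can only decrease \<open>T[G]\<close> and increase \<open>T[F]\<close>.
  So each weak trace of \<open>K\<close> can be replayed by \<open>G\<close> by induction on its derivation, and each
  weak trace of \<open>F\<close> by \<open>K\<close> by induction on the pair (state of \<open>K\<close>, remaining trace), which
  is well founded since \<open>K\<close> does not diverge.\<close>

lemma up_0 [simp]: "up 0 f = f"
  by (simp add: up_def fun_eq_iff)

lemma up_up: "up a (up b f) = up (a + b) f"
  by (auto simp: up_def fun_eq_iff)

lemma up_comp: "(\<lambda>i. up k f (up k g i)) = up k (\<lambda>i. f (g i))"
  by (auto simp: up_def fun_eq_iff)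

lemma up_ident [simp]: "up k (\<lambda>i. i) = (\<lambda>i. i)"
  by (auto simp: up_def fun_eq_iff)

lemma up_shift [simp]: "up k f (i + k) = f i + k"
  by (simp add: up_def)

lemma up_Suc_0 [simp]: "up (Suc 0) f 0 = 0" "up (Suc 0) f (Suc a) = Suc (f a)"
  by (simp_all add: up_def)

lemma up_swp: "up (Suc 0) (up k f) (swp k i) = swp k (up k (up (Suc 0) f) i)"
  by (auto simp: up_def swp_def)

lemma swp_0 [simp]: "swp 0 = (\<lambda>i. i)"
  by (simp add: swp_def fun_eq_iff)

lemma inj_up: "inj f \<Longrightarrow> inj (up k f)"
  unfolding inj_def up_def
proof (intro allI impI)
  fix x y assume f: "\<forall>x y. f x = f y \<longrightarrow> x = y"
    and e: "(if x < k then x else f (x - k) + k) = (if y < k then y else f (y - k) + k)"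
  show "x = y"
  proof (cases "x < k"; cases "y < k")
    assume "\<not> x < k" "\<not> y < k"
    then show ?thesis using e f by (metis add_right_cancel le_add_diff_inverse2 not_less)
  qed (use e in auto)
qed

lemma inj_shift: "inj (\<lambda>i. i + (k::nat))"
  by (simp add: inj_def)

lemma inj_swp: "inj (swp k)"
  by (auto simp: inj_def swp_def)

lemma ren_ren: "ren f (ren g P) = ren (\<lambda>i. f (g i)) P"
  by (induction P arbitrary: f g) (simp_all add: up_comp comp_def)

lemma ren_ident [simp]: "ren (\<lambda>i. i) P = P"
  by (induction P) simp_all

lemma ren_resn: "ren f (resn k P) = resn k (ren (up k f) P)"
  by (induction k arbitrary: f) (simp_all add: up_up)

lemma ren_shift_commute: "ren (up k f) (ren (\<lambda>i. i + k) Q) = ren (\<lambda>i. i + k) (ren f Q)"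
  by (simp add: ren_ren)

lemma ren_swp_commute:
  "ren (up (Suc 0) (up k f)) (ren (swp k) P) = ren (swp k) (ren (up k (up (Suc 0) f)) P)"
  by (simp add: ren_ren up_swp)

primrec names_below :: "nat \<Rightarrow> 's pr \<Rightarrow> bool" where
  "names_below n PNil = True"
| "names_below n (PIn a k P) = (a < n \<and> names_below (k + n) P)"
| "names_below n (POut a k P) = (a < n \<and> names_below (k + n) P)"
| "names_below n (PRes P) = names_below (Suc n) P"
| "names_below n (PPar P Q) = (names_below n P \<and> names_below n Q)"
| "names_below n (PRep a k P) = (a < n \<and> names_below (k + n) P)"
| "names_below n (PVar i xs) = (\<forall>x\<in>set xs. x < n)"
| "names_below n (PSol E i xs) = (\<forall>x\<in>set xs. x < n)"

lemma up_cong: "\<forall>i<n. f i = g i \<Longrightarrow> \<forall>i<k + n. up k f i = up k g i"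
  by (auto simp: up_def)

lemma up_below: "\<forall>i<n. f i < m \<Longrightarrow> \<forall>i<k + n. up k f i < k + m"
  by (auto simp: up_def)

lemma ren_cong: "names_below n P \<Longrightarrow> \<forall>i<n. f i = g i \<Longrightarrow> ren f P = ren g P"
proof (induction P arbitrary: n f g)
  case (PRes P)
  then show ?case using up_cong[of n f g 1] by simp
qed (auto simp: up_cong)

lemma names_below_ren: "names_below n P \<Longrightarrow> \<forall>i<n. f i < m \<Longrightarrow> names_below m (ren f P)"
proof (induction P arbitrary: n m f)
  case (PRes P)
  then show ?case using up_below[of n f m 1] by simp
qed (auto simp: up_below)

lemma ren_ident_below: "names_below n P \<Longrightarrow> \<forall>i<n. f i = i \<Longrightarrow> ren f P = P"
  using ren_cong[of n P f "\<lambda>i. i"] by simp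

fun ren_act :: "(nat \<Rightarrow> nat) \<Rightarrow> act \<Rightarrow> act" where
  "ren_act f Tau = Tau"
| "ren_act f (InA a k) = InA (f a) k"
| "ren_act f (OutA a k) = OutA (f a) k"

fun dual_act :: "act \<Rightarrow> act" where
  "dual_act Tau = Tau"
| "dual_act (InA a k) = OutA a k"
| "dual_act (OutA a k) = InA a k"

lemma ar_ren_act [simp]: "ar (ren_act f \<mu>) = ar \<mu>"
  by (cases \<mu>) auto

lemma ren_act_eq_Tau_iff [simp]: "ren_act f \<mu> = Tau \<longleftrightarrow> \<mu> = Tau" "Tau = ren_act f \<mu> \<longleftrightarrow> \<mu> = Tau"
  by (cases \<mu>; auto)+

lemma ren_act_ren_act [simp]: "ren_act f (ren_act g \<mu>) = ren_act (\<lambda>i. f (g i)) \<mu>"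
  by (cases \<mu>) auto

lemma ar_dual_act [simp]: "ar (dual_act \<mu>) = ar \<mu>"
  by (cases \<mu>) auto

lemma ren_act_dual_act: "ren_act f (dual_act \<mu>) = dual_act (ren_act f \<mu>)"
  by (cases \<mu>) auto

lemma inj_ren_act: "inj f \<Longrightarrow> inj (ren_act f)"
  by (auto simp: inj_def elim!: ren_act.elims)

lemma ren_act_up_Suc_inv:
  assumes "ren_act (up (Suc 0) f) \<nu> = ren_act Suc \<mu>"
  shows "\<exists>\<mu>0. \<nu> = ren_act Suc \<mu>0 \<and> \<mu> = ren_act f \<mu>0"
proof -
  have subject: "b = Suc (b - 1) \<and> a = f (b - 1)" if "up (Suc 0) f b = Suc a" for a b
    using that by (auto simp: up_def split: if_splits)
  show ?thesis
  proof (cases \<nu>)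
    case Tau
    then show ?thesis using assms by (intro exI[of _ Tau]) simp
  next
    case (InA b k)
    then show ?thesis using assms subject by (cases \<mu>) (auto intro!: exI[of _ "InA (b - 1) k"])
  next
    case (OutA b k)
    then show ?thesis using assms subject by (cases \<mu>) (auto intro!: exI[of _ "OutA (b - 1) k"])
  qed
qed

lemma step_comm:
  "\<nu> \<noteq> Tau \<Longrightarrow> step P \<nu> P' \<Longrightarrow> step Q (dual_act \<nu>) Q' \<Longrightarrow> step (PPar P Q) Tau (resn (ar \<nu>) (PPar P' Q'))"
  by (cases \<nu>) (auto intro: step.intros)

lemma step_res: "step P (ren_act Suc \<mu>) P' \<Longrightarrow> step (PRes P) \<mu> (PRes (ren (swp (ar \<mu>)) P'))"
  by (cases \<mu>) (auto intro: step.intros)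

text \<open>Rule induction with the two communication rules merged via \<open>dual_act\<close> and the three
  restriction rules via \<open>ren_act Suc\<close> (note \<open>swp 0\<close> is the identity).\<close>

lemma step_induct [consumes 1, case_names In Out Rep ParL ParR Comm Res Sol]:
  assumes "step P \<mu> X"
    and "\<And>a k P. Q (PIn a k P) (InA a k) P"
    and "\<And>a k P. Q (POut a k P) (OutA a k) P"
    and "\<And>a k P. Q (PRep a k P) (InA a k) (PPar P (ren (\<lambda>i. i + k) (PRep a k P)))"
    and "\<And>P \<mu> P' R. step P \<mu> P' \<Longrightarrow> Q P \<mu> P' \<Longrightarrow> Q (PPar P R) \<mu> (PPar P' (ren (\<lambda>i. i + ar \<mu>) R))"
    and "\<And>R \<mu> R' P. step R \<mu> R' \<Longrightarrow> Q R \<mu> R' \<Longrightarrow> Q (PPar P R) \<mu> (PPar (ren (\<lambda>i. i + ar \<mu>) P) R')"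
    and "\<And>P \<nu> P' R R'. \<nu> \<noteq> Tau \<Longrightarrow> step P \<nu> P' \<Longrightarrow> Q P \<nu> P'
           \<Longrightarrow> step R (dual_act \<nu>) R' \<Longrightarrow> Q R (dual_act \<nu>) R'
           \<Longrightarrow> Q (PPar P R) Tau (resn (ar \<nu>) (PPar P' R'))"
    and "\<And>P \<mu> P'. step P (ren_act Suc \<mu>) P' \<Longrightarrow> Q P (ren_act Suc \<mu>) P'
           \<Longrightarrow> Q (PRes P) \<mu> (PRes (ren (swp (ar \<mu>)) P'))"
    and "\<And>E i xs \<mu> P'. step (unfold_sol E i xs) \<mu> P' \<Longrightarrow> Q (unfold_sol E i xs) \<mu> P'
           \<Longrightarrow> Q (PSol E i xs) \<mu> P'"
  shows "Q P \<mu> X"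
  using assms(1)
proof (induction rule: step.induct)
  case (s_comm1 P a k P' R R')
  then show ?case using assms(7)[of "InA a k"] by simp
next
  case (s_comm2 P a k P' R R')
  then show ?case using assms(7)[of "OutA a k"] by simp
next
  case (s_res_tau P P')
  then show ?case using assms(8)[of P Tau] by simp
next
  case (s_res_in P a k P')
  then show ?case using assms(8)[of P "InA a k"] by simp
next
  case (s_res_out P a k P')
  then show ?case using assms(8)[of P "OutA a k"] by simp
qed (use assms in auto)

lemma step_PPar_cases:
  assumes "step (PPar P Q) \<mu> X"
  shows "(\<exists>P'. step P \<mu> P' \<and> X = PPar P' (ren (\<lambda>i. i + ar \<mu>) Q))
    \<or> (\<exists>Q'. step Q \<mu> Q' \<and> X = PPar (ren (\<lambda>i. i + ar \<mu>) P) Q')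
    \<or> (\<exists>\<nu> P' Q'. \<mu> = Tau \<and> \<nu> \<noteq> Tau \<and> step P \<nu> P' \<and> step Q (dual_act \<nu>) Q'
         \<and> X = resn (ar \<nu>) (PPar P' Q'))"
  using assms
proof (cases rule: step.cases)
  case (s_comm1 a k P' Q')
  then show ?thesis by (metis act.distinct(1) ar.simps(2) dual_act.simps(2))
next
  case (s_comm2 a k P' Q')
  then show ?thesis by (metis act.distinct(3) ar.simps(3) dual_act.simps(3))
qed auto

lemma step_PRes_cases:
  "step (PRes P) \<mu> X \<Longrightarrow> \<exists>P'. step P (ren_act Suc \<mu>) P' \<and> X = PRes (ren (swp (ar \<mu>)) P')"
  by (erule step.cases) auto

inductive_cases step_PNilE: "step PNil \<mu> X"
inductive_cases step_PInE: "step (PIn a k P) \<mu> X"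
inductive_cases step_POutE: "step (POut a k P) \<mu> X"
inductive_cases step_PRepE: "step (PRep a k P) \<mu> X"
inductive_cases step_PSolE: "step (PSol E i xs) \<mu> X"

text \<open>The sort-free content of \<open>wt\<close> that the argument needs (\<open>wt_imp_wf_pr\<close>);
  \<open>vs\<close> gives the arity of each equation variable.\<close>

inductive wf_pr :: "(nat \<Rightarrow> nat option) \<Rightarrow> 's pr \<Rightarrow> bool" where
  wf_nil: "wf_pr vs PNil"
| wf_in: "wf_pr vs P \<Longrightarrow> wf_pr vs (PIn a k P)"
| wf_out: "wf_pr vs P \<Longrightarrow> wf_pr vs (POut a k P)"
| wf_rep: "wf_pr vs P \<Longrightarrow> wf_pr vs (PRep a k P)"
| wf_res: "wf_pr vs P \<Longrightarrow> wf_pr vs (PRes P)"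
| wf_par: "wf_pr vs P \<Longrightarrow> wf_pr vs Q \<Longrightarrow> wf_pr vs (PPar P Q)"
| wf_var: "vs i = Some (length xs) \<Longrightarrow> distinct xs \<Longrightarrow> wf_pr vs (PVar i xs)"
| wf_sol: "\<forall>j. wf_pr (\<lambda>j. Some (length (fst (E j)))) (snd (E j))
              \<and> names_below (length (fst (E j))) (snd (E j))
          \<Longrightarrow> length xs = length (fst (E i)) \<Longrightarrow> wf_pr vs (PSol E i xs)"

inductive_cases wf_prE:
  "wf_pr vs (PIn a k P)" "wf_pr vs (POut a k P)" "wf_pr vs (PRep a k P)"
  "wf_pr vs (PRes P)" "wf_pr vs (PPar P Q)" "wf_pr vs (PVar i xs)" "wf_pr vs (PSol E i xs)"

abbreviation no_vars :: "nat \<Rightarrow> nat option" where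
  "no_vars \<equiv> \<lambda>_. None"

lemma wf_pr_mono: "wf_pr vs P \<Longrightarrow> (\<And>i m. vs i = Some m \<Longrightarrow> vs' i = Some m) \<Longrightarrow> wf_pr vs' P"
  by (induction vs P rule: wf_pr.induct) (auto intro: wf_pr.intros)

lemma wf_pr_no_vars: "wf_pr no_vars P \<Longrightarrow> wf_pr vs P"
  using wf_pr_mono by fastforce

lemma wf_pr_ren: "wf_pr vs P \<Longrightarrow> inj f \<or> vs = no_vars \<Longrightarrow> wf_pr vs (ren f P)"
proof (induction vs P arbitrary: f rule: wf_pr.induct)
  case (wf_var vs i xs)
  then show ?case by (auto intro!: wf_pr.intros simp: distinct_map inj_on_def inj_def)
qed (auto intro!: wf_pr.intros simp: inj_up)

lemma wf_pr_resn: "wf_pr vs P \<Longrightarrow> wf_pr vs (resn k P)"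
  by (induction k) (auto intro: wf_pr.intros)

lemma wt_imp_wf_pr: "wt ob vs \<Gamma> P \<Longrightarrow> wf_pr (\<lambda>j. map_option length (vs j)) P \<and> names_below (length \<Gamma>) P"
proof (induction rule: wt.induct)
  case (wt_var xs \<Gamma> vs i)
  then show ?case by (auto intro!: wf_pr.intros)
next
  case (wt_sol E xs \<Gamma> i vs)
  then show ?case by (auto intro!: wf_pr.intros simp: comp_def) (metis length_map)
qed (auto intro: wf_pr.intros)

definition wf_subst :: "(nat \<Rightarrow> nat option) \<Rightarrow> (nat \<Rightarrow> 's abs) \<Rightarrow> bool" where
  "wf_subst vs H \<longleftrightarrow> (\<forall>j m. vs j = Some m \<longrightarrow> wf_pr no_vars (snd (H j)) \<and> names_below m (snd (H j)))"

lemma wf_pr_substV: "wf_pr vs T \<Longrightarrow> wf_subst vs H \<Longrightarrow> wf_pr vs' (substV H T)"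
proof -
  assume "wf_pr vs T" "wf_subst vs H"
  then have "wf_pr no_vars (substV H T)"
  proof (induction vs T rule: wf_pr.induct)
    case (wf_var vs i xs)
    then show ?case by (auto simp: wf_subst_def intro!: wf_pr_ren)
  qed (auto intro: wf_pr.intros)
  then show ?thesis by (rule wf_pr_no_vars)
qed

lemma names_below_substV:
  "wf_pr vs T \<Longrightarrow> wf_subst vs H \<Longrightarrow> names_below n T \<Longrightarrow> names_below n (substV H T)"
proof (induction vs T arbitrary: n rule: wf_pr.induct)
  case (wf_var vs i xs)
  then show ?case by (auto simp: wf_subst_def intro!: names_below_ren)
qed auto

lemma ren_substV: "wf_pr vs T \<Longrightarrow> wf_subst vs H \<Longrightarrow> ren f (substV H T) = substV H (ren f T)"
proof (induction vs T arbitrary: f rule: wf_pr.induct)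
  case (wf_var vs i xs)
  then have "names_below (length xs) (snd (H i))" by (auto simp: wf_subst_def)
  then show ?case by (simp add: ren_ren) (rule ren_cong, auto)
qed auto

lemma substV_no_vars: "wf_pr no_vars T \<Longrightarrow> substV H T = T"
  by (induction "no_vars :: nat \<Rightarrow> nat option" T rule: wf_pr.induct) auto

lemma substV_resn: "substV H (resn k P) = resn k (substV H P)"
  by (induction k) auto

lemma substV_cong: "wf_pr vs T \<Longrightarrow> (\<And>j m. vs j = Some m \<Longrightarrow> snd (H j) = snd (H' j))
   \<Longrightarrow> substV H T = substV H' T"
  by (induction vs T rule: wf_pr.induct) auto

definition const_subst :: "(nat \<Rightarrow> 's abs) \<Rightarrow> nat \<Rightarrow> 's abs" where
  "const_subst E j = (fst (E j), PSol E j [0..<length (fst (E j))])"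

lemma unfold_sol_eq: "unfold_sol E i xs = ren (\<lambda>n. xs ! n) (substV (const_subst E) (snd (E i)))"
  by (simp add: unfold_sol_def const_subst_def[abs_def])

lemma wf_subst_const_subst:
  assumes "\<forall>j. wf_pr (\<lambda>j. Some (length (fst (E j)))) (snd (E j))
              \<and> names_below (length (fst (E j))) (snd (E j))"
  shows "wf_subst (\<lambda>j. Some (length (fst (E j)))) (const_subst E)"
  using assms by (auto simp: wf_subst_def const_subst_def intro!: wf_pr.intros)

lemma wf_pr_unfold_sol: "wf_pr vs (PSol E i xs) \<Longrightarrow> wf_pr vs' (unfold_sol E i xs)"
proof (erule wf_prE)
  assume wf: "\<forall>j. wf_pr (\<lambda>j. Some (length (fst (E j)))) (snd (E j))
                   \<and> names_below (length (fst (E j))) (snd (E j))"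
  have "wf_pr no_vars (substV (const_subst E) (snd (E i)))"
    using wf_pr_substV[OF conjunct1[OF wf[rule_format]] wf_subst_const_subst[OF wf]] .
  then have "wf_pr no_vars (unfold_sol E i xs)"
    unfolding unfold_sol_eq by (rule wf_pr_ren) simp
  then show ?thesis by (rule wf_pr_no_vars)
qed

lemma ren_unfold_sol: "wf_pr vs (PSol E i xs) \<Longrightarrow> ren f (unfold_sol E i xs) = unfold_sol E i (map f xs)"
proof (erule wf_prE)
  assume wf: "\<forall>j. wf_pr (\<lambda>j. Some (length (fst (E j)))) (snd (E j))
                   \<and> names_below (length (fst (E j))) (snd (E j))"
    and len: "length xs = length (fst (E i))"
  have "names_below (length xs) (substV (const_subst E) (snd (E i)))"
    using names_below_substV[OF _ wf_subst_const_subst[OF wf]] wf len by metis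
  then show ?thesis
    by (simp add: unfold_sol_eq ren_ren) (rule ren_cong, auto)
qed

lemma step_wf_pr: "step P \<mu> P' \<Longrightarrow> wf_pr vs P \<Longrightarrow> wf_pr vs P'"
proof (induction arbitrary: vs rule: step_induct)
  case (Rep a k P)
  have "wf_pr vs (ren (\<lambda>i. i + k) (PRep a k P))" using wf_pr_ren inj_shift Rep by blast
  then show ?case using Rep by (blast elim: wf_prE intro: wf_par)
next
  case (ParL P \<mu> P' R)
  have "wf_pr vs (ren (\<lambda>i. i + ar \<mu>) R)" using wf_pr_ren inj_shift ParL by (blast elim: wf_prE)
  then show ?case using ParL by (blast elim: wf_prE intro: wf_par)
next
  case (ParR R \<mu> R' P)
  have "wf_pr vs (ren (\<lambda>i. i + ar \<mu>) P)" using wf_pr_ren inj_shift ParR by (blast elim: wf_prE)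
  then show ?case using ParR by (blast elim: wf_prE intro: wf_par)
next
  case (Res P \<mu> P')
  then show ?case using wf_pr_ren inj_swp by (blast elim: wf_prE intro: wf_res)
next
  case (Sol E i xs \<mu> P')
  then show ?case using wf_pr_unfold_sol by blast
qed (auto elim!: wf_prE intro!: wf_pr.intros wf_pr_resn)

lemma step_ren:
  "step P \<mu> P' \<Longrightarrow> wf_pr vs P \<Longrightarrow> step (ren f P) (ren_act f \<mu>) (ren (up (ar \<mu>) f) P')"
proof (induction arbitrary: f rule: step_induct)
  case (In a k P)
  then show ?case by (simp add: step.s_in)
next
  case (Out a k P)
  then show ?case by (simp add: step.s_out)
next
  case (Rep a k P)
  have e: "ren (up k f) (ren (\<lambda>i. i + k) (PRep a k P))
      = ren (\<lambda>i. i + k) (PRep (f a) k (ren (up k f) P))"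
    by (subst ren_shift_commute) simp
  have r: "ren f (PRep a k P) = PRep (f a) k (ren (up k f) P)" by simp
  show ?case unfolding r ren.simps(5) e ren_act.simps ar.simps by (rule step.s_rep)
next
  case (ParL P \<mu> P' R)
  then have "step (ren f P) (ren_act f \<mu>) (ren (up (ar \<mu>) f) P')" by (blast elim: wf_prE)
  from step.s_parl[OF this, of "ren f R"] show ?case by (simp add: ren_shift_commute)
next
  case (ParR R \<mu> R' P)
  then have "step (ren f R) (ren_act f \<mu>) (ren (up (ar \<mu>) f) R')" by (blast elim: wf_prE)
  from step.s_parr[OF this, of "ren f P"] show ?case by (simp add: ren_shift_commute)
next
  case (Comm P \<nu> P' R R')
  then have "step (ren f P) (ren_act f \<nu>) (ren (up (ar \<nu>) f) P')"
    "step (ren f R) (dual_act (ren_act f \<nu>)) (ren (up (ar \<nu>) f) R')"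
    by (auto elim!: wf_prE simp: ren_act_dual_act[symmetric])
  from step_comm[OF _ this] Comm.hyps(1) show ?case by (simp add: ren_resn)
next
  case (Res P \<mu> P')
  from Res.prems have "wf_pr vs P" by (blast elim: wf_prE)
  with Res.IH[of "up (Suc 0) f"] have
    "step (ren (up (Suc 0) f) P) (ren_act Suc (ren_act f \<mu>)) (ren (up (ar \<mu>) (up (Suc 0) f)) P')"
    by simp
  from step_res[OF this] show ?case by (simp add: ren_swp_commute)
next
  case (Sol E i xs \<mu> P')
  then show ?case by (simp add: ren_unfold_sol[symmetric] wf_pr_unfold_sol step.s_sol)
qed

lemma step_ren_inv:
  "step (ren f P) \<mu> X \<Longrightarrow> inj f \<Longrightarrow> wf_pr vs P
   \<Longrightarrow> \<exists>\<mu>0 P0. step P \<mu>0 P0 \<and> \<mu> = ren_act f \<mu>0 \<and> X = ren (up (ar \<mu>0) f) P0"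
proof (induction "ren f P" \<mu> X arbitrary: P f rule: step_induct)
  case (In a k Q)
  then obtain a' P1 where "P = PIn a' k P1" "a = f a'" "Q = ren (up k f) P1" by (cases P) auto
  then show ?case using step.s_in by fastforce
next
  case (Out a k Q)
  then obtain a' P1 where "P = POut a' k P1" "a = f a'" "Q = ren (up k f) P1" by (cases P) auto
  then show ?case using step.s_out by fastforce
next
  case (Rep a k Q)
  then obtain a' P1 where P: "P = PRep a' k P1" "a = f a'" "Q = ren (up k f) P1" by (cases P) auto
  have "ren (up k f) (ren (\<lambda>i. i + k) (PRep a' k P1)) = ren (\<lambda>i. i + k) (PRep a k Q)"
    by (subst ren_shift_commute) (simp add: P)
  then have "PPar Q (ren (\<lambda>i. i + k) (PRep a k Q))
      = ren (up k f) (PPar P1 (ren (\<lambda>i. i + k) (PRep a' k P1)))"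
    by (simp del: ren.simps(6) add: P)
  then show ?case using P step.s_rep by fastforce
next
  case (ParL Q1 \<mu> Q1' Q2)
  then obtain P1 P2 where P: "P = PPar P1 P2" "Q1 = ren f P1" "Q2 = ren f P2" by (cases P) auto
  with ParL obtain \<mu>0 P0 where "step P1 \<mu>0 P0" "\<mu> = ren_act f \<mu>0" "Q1' = ren (up (ar \<mu>0) f) P0"
    by (blast elim: wf_prE)
  then show ?case
    by (intro exI[of _ \<mu>0] exI[of _ "PPar P0 (ren (\<lambda>i. i + ar \<mu>0) P2)"])
      (simp add: P step.s_parl ren_shift_commute)
next
  case (ParR Q2 \<mu> Q2' Q1)
  then obtain P1 P2 where P: "P = PPar P1 P2" "Q1 = ren f P1" "Q2 = ren f P2" by (cases P) auto
  with ParR obtain \<mu>0 P0 where "step P2 \<mu>0 P0" "\<mu> = ren_act f \<mu>0" "Q2' = ren (up (ar \<mu>0) f) P0"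
    by (blast elim: wf_prE)
  then show ?case
    by (intro exI[of _ \<mu>0] exI[of _ "PPar (ren (\<lambda>i. i + ar \<mu>0) P1) P0"])
      (simp add: P step.s_parr ren_shift_commute)
next
  case (Comm Q1 \<nu> Q1' Q2 Q2')
  then obtain P1 P2 where P: "P = PPar P1 P2" "Q1 = ren f P1" "Q2 = ren f P2" by (cases P) auto
  with Comm obtain \<nu>1 P1' where h1: "step P1 \<nu>1 P1'" "\<nu> = ren_act f \<nu>1" "Q1' = ren (up (ar \<nu>1) f) P1'"
    by (blast elim: wf_prE)
  from P Comm obtain \<nu>2 P2' where h2: "step P2 \<nu>2 P2'" "dual_act \<nu> = ren_act f \<nu>2"
      "Q2' = ren (up (ar \<nu>2) f) P2'"
    by (blast elim: wf_prE)
  have "\<nu>2 = dual_act \<nu>1"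
    using h1(2) h2(2) injD[OF inj_ren_act[OF Comm.prems(1)]] by (metis ren_act_dual_act)
  with h1 h2 Comm.hyps(1) show ?case
    by (intro exI[of _ Tau] exI[of _ "resn (ar \<nu>1) (PPar P1' P2')"])
      (auto simp: P ren_resn intro: step_comm)
next
  case (Res Q \<mu> Q')
  then obtain P1 where P: "P = PRes P1" "Q = ren (up (Suc 0) f) P1" by (cases P) auto
  with Res obtain \<mu>1 P1' where h: "step P1 \<mu>1 P1'" "ren_act Suc \<mu> = ren_act (up (Suc 0) f) \<mu>1"
      "Q' = ren (up (ar \<mu>1) (up (Suc 0) f)) P1'"
    by (metis wf_prE(4) inj_up)
  from ren_act_up_Suc_inv[OF h(2)[symmetric]] obtain \<mu>0 where
    \<mu>0: "\<mu>1 = ren_act Suc \<mu>0" "\<mu> = ren_act f \<mu>0" by blast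
  with h show ?case
    by (intro exI[of _ \<mu>0] exI[of _ "PRes (ren (swp (ar \<mu>0)) P1')"])
      (simp add: P step_res ren_swp_commute)
next
  case (Sol E i ys \<mu> X)
  then obtain xs where P: "P = PSol E i xs" "ys = map f xs" by (cases P) auto
  have "unfold_sol E i ys = ren f (unfold_sol E i xs)"
    using ren_unfold_sol Sol.prems P by metis
  with Sol P wf_pr_unfold_sol show ?case by (metis step.s_sol)
qed

definition visible :: "act \<Rightarrow> act list" where
  "visible \<mu> = (if \<mu> = Tau then [] else [\<mu>])"

fun ren_trace :: "(nat \<Rightarrow> nat) \<Rightarrow> act list \<Rightarrow> act list" where
  "ren_trace f [] = []"
| "ren_trace f (\<mu> # s) = ren_act f \<mu> # ren_trace (up (ar \<mu>) f) s"

lemma ren_trace_visible: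
  "ren_trace f (visible \<mu> @ s) = visible (ren_act f \<mu>) @ ren_trace (up (ar \<mu>) f) s"
  by (cases "\<mu> = Tau") (simp_all add: visible_def)

lemma wtr_stepI: "step P \<mu> P' \<Longrightarrow> wtr P' s \<Longrightarrow> wtr P (visible \<mu> @ s)"
  by (cases "\<mu> = Tau") (auto simp: visible_def intro: wtr.intros)

lemma wtr_step_induct [consumes 1, case_names Nil Step]:
  assumes "wtr P s"
    and "\<And>P. Q P []"
    and "\<And>P \<mu> P' s. step P \<mu> P' \<Longrightarrow> wtr P' s \<Longrightarrow> Q P' s \<Longrightarrow> Q P (visible \<mu> @ s)"
  shows "Q P s"
  using assms(1)
proof (induction rule: wtr.induct)
  case (wtr_tau P P' s)
  then show ?case using assms(3)[of P Tau P' s] by (simp add: visible_def)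
next
  case (wtr_vis P \<mu> P' s)
  then show ?case using assms(3)[of P \<mu> P' s] by (simp add: visible_def)
qed (rule assms(2))

lemma wtr_step_cases:
  "wtr P s \<Longrightarrow> s = [] \<or> (\<exists>\<mu> P' s'. step P \<mu> P' \<and> wtr P' s' \<and> s = visible \<mu> @ s')"
  by (erule wtr.cases) (auto simp: visible_def)

lemma wtr_ren: "wtr P s \<Longrightarrow> wf_pr vs P \<Longrightarrow> wtr (ren f P) (ren_trace f s)"
proof (induction arbitrary: f rule: wtr_step_induct)
  case (Nil P)
  then show ?case by (simp add: wtr_nil)
next
  case (Step P \<mu> P' s)
  then have "step (ren f P) (ren_act f \<mu>) (ren (up (ar \<mu>) f) P')"
    and "wtr (ren (up (ar \<mu>) f) P') (ren_trace (up (ar \<mu>) f) s)"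
    using step_ren step_wf_pr by blast+
  then show ?case unfolding ren_trace_visible by (rule wtr_stepI)
qed

lemma wtr_ren_inv:
  "wtr (ren f P) s \<Longrightarrow> inj f \<Longrightarrow> wf_pr vs P \<Longrightarrow> \<exists>s0. wtr P s0 \<and> s = ren_trace f s0"
proof (induction "ren f P" s arbitrary: P f rule: wtr_step_induct)
  case Nil
  then show ?case using wtr_nil by fastforce
next
  case (Step \<mu> X s)
  then obtain \<mu>0 P0 where h: "step P \<mu>0 P0" "\<mu> = ren_act f \<mu>0" "X = ren (up (ar \<mu>0) f) P0"
    using step_ren_inv by metis
  with Step obtain s0 where "wtr P0 s0" "s = ren_trace (up (ar \<mu>0) f) s0"
    using step_wf_pr inj_up by metis
  with h show ?case by (metis ren_trace_visible wtr_stepI)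
qed

lemma tr_le_ren:
  "inj f \<Longrightarrow> wf_pr vs P \<Longrightarrow> wf_pr vs' Q \<Longrightarrow> tr_le P Q \<Longrightarrow> tr_le (ren f P) (ren f Q)"
  unfolding tr_le_def using wtr_ren wtr_ren_inv by metis

section \<open>Trace preorder is a precongruence\<close>

datatype 's ctx = CHole | CParL "'s ctx" "'s pr" | CParR "'s pr" "'s ctx" | CRes "'s ctx"

primrec plug :: "'s ctx \<Rightarrow> 's pr \<Rightarrow> 's pr" where
  "plug CHole P = P"
| "plug (CParL C R) P = PPar (plug C P) R"
| "plug (CParR R C) P = PPar R (plug C P)"
| "plug (CRes C) P = PRes (plug C P)"

primrec ren_ctx :: "(nat \<Rightarrow> nat) \<Rightarrow> 's ctx \<Rightarrow> 's ctx" where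
  "ren_ctx f CHole = CHole"
| "ren_ctx f (CParL C R) = CParL (ren_ctx f C) (ren f R)"
| "ren_ctx f (CParR R C) = CParR (ren f R) (ren_ctx f C)"
| "ren_ctx f (CRes C) = CRes (ren_ctx (up (Suc 0) f) C)"

primrec hole_ren :: "'s ctx \<Rightarrow> (nat \<Rightarrow> nat) \<Rightarrow> nat \<Rightarrow> nat" where
  "hole_ren CHole f = f"
| "hole_ren (CParL C R) f = hole_ren C f"
| "hole_ren (CParR R C) f = hole_ren C f"
| "hole_ren (CRes C) f = hole_ren C (up (Suc 0) f)"

primrec ctx_resn :: "nat \<Rightarrow> 's ctx \<Rightarrow> 's ctx" where
  "ctx_resn 0 C = C"
| "ctx_resn (Suc k) C = CRes (ctx_resn k C)"

lemma ren_plug: "ren f (plug C P) = plug (ren_ctx f C) (ren (hole_ren C f) P)"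
  by (induction C arbitrary: f) auto

lemma inj_hole_ren: "inj f \<Longrightarrow> inj (hole_ren C f)"
  by (induction C arbitrary: f) (auto simp: inj_up)

lemma plug_ctx_resn: "plug (ctx_resn k C) P = resn k (plug C P)"
  by (induction k) auto

text \<open>The transition \<open>C[P] \<rightarrow> X\<close> is performed by the hole content moving along \<open>R\<close>
  (or staying idle, for \<open>R = (=)\<close>), uniformly in the hole content.\<close>

definition plug_step_via ::
  "('s pr \<Rightarrow> 's pr \<Rightarrow> bool) \<Rightarrow> 's ctx \<Rightarrow> act \<Rightarrow> 's pr \<Rightarrow> 's pr \<Rightarrow> bool" where
  "plug_step_via R C \<mu> P X \<longleftrightarrow> (\<exists>C' g P'. inj g \<and> R P P' \<and> X = plug C' (ren g P')
     \<and> (\<forall>Q Q'. R Q Q' \<longrightarrow> step (plug C Q) \<mu> (plug C' (ren g Q'))))"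

lemma plug_step_via_ParL:
  assumes "plug_step_via R C \<mu> P Y"
  shows "plug_step_via R (CParL C S) \<mu> P (PPar Y (ren (\<lambda>i. i + ar \<mu>) S))"
proof -
  obtain C' g P' where h: "inj g" "R P P'" "Y = plug C' (ren g P')"
    "\<And>Q Q'. R Q Q' \<Longrightarrow> step (plug C Q) \<mu> (plug C' (ren g Q'))"
    using assms(1) unfolding plug_step_via_def by blast
  then show ?thesis unfolding plug_step_via_def
    by (intro exI[of _ "CParL C' (ren (\<lambda>i. i + ar \<mu>) S)"] exI[of _ g] exI[of _ P'])
      (auto intro: step.s_parl)
qed

lemma plug_step_via_ParR:
  assumes "plug_step_via R C \<mu> P Y"
  shows "plug_step_via R (CParR S C) \<mu> P (PPar (ren (\<lambda>i. i + ar \<mu>) S) Y)"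
proof -
  obtain C' g P' where h: "inj g" "R P P'" "Y = plug C' (ren g P')"
    "\<And>Q Q'. R Q Q' \<Longrightarrow> step (plug C Q) \<mu> (plug C' (ren g Q'))"
    using assms(1) unfolding plug_step_via_def by blast
  then show ?thesis unfolding plug_step_via_def
    by (intro exI[of _ "CParR (ren (\<lambda>i. i + ar \<mu>) S) C'"] exI[of _ g] exI[of _ P'])
      (auto intro: step.s_parr)
qed

lemma plug_step_via_CommL:
  assumes "plug_step_via R C \<nu> P Y" "\<nu> \<noteq> Tau" "step S (dual_act \<nu>) S'"
  shows "plug_step_via R (CParL C S) Tau P (resn (ar \<nu>) (PPar Y S'))"
proof -
  obtain C' g P' where h: "inj g" "R P P'" "Y = plug C' (ren g P')"
    "\<And>Q Q'. R Q Q' \<Longrightarrow> step (plug C Q) \<nu> (plug C' (ren g Q'))"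
    using assms(1) unfolding plug_step_via_def by blast
  then show ?thesis unfolding plug_step_via_def
    by (intro exI[of _ "ctx_resn (ar \<nu>) (CParL C' S')"] exI[of _ g] exI[of _ P'])
      (auto simp: plug_ctx_resn intro!: step_comm[OF assms(2)] h(4) assms(3))
qed

lemma plug_step_via_CommR:
  assumes "plug_step_via R C (dual_act \<nu>) P Y" "\<nu> \<noteq> Tau" "step S \<nu> S'"
  shows "plug_step_via R (CParR S C) Tau P (resn (ar \<nu>) (PPar S' Y))"
proof -
  obtain C' g P' where h: "inj g" "R P P'" "Y = plug C' (ren g P')"
    "\<And>Q Q'. R Q Q' \<Longrightarrow> step (plug C Q) (dual_act \<nu>) (plug C' (ren g Q'))"
    using assms(1) unfolding plug_step_via_def by blast
  then show ?thesis unfolding plug_step_via_def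
    by (intro exI[of _ "ctx_resn (ar \<nu>) (CParR S' C')"] exI[of _ g] exI[of _ P'])
      (auto simp: plug_ctx_resn intro!: step_comm[OF assms(2)] h(4) assms(3))
qed

lemma plug_step_via_Res:
  assumes "plug_step_via R C (ren_act Suc \<mu>) P Y"
  shows "plug_step_via R (CRes C) \<mu> P (PRes (ren (swp (ar \<mu>)) Y))"
proof -
  obtain C' g P' where h: "inj g" "R P P'" "Y = plug C' (ren g P')"
    "\<And>Q Q'. R Q Q' \<Longrightarrow> step (plug C Q) (ren_act Suc \<mu>) (plug C' (ren g Q'))"
    using assms(1) unfolding plug_step_via_def by blast
  let ?g = "\<lambda>i. hole_ren C' (swp (ar \<mu>)) (g i)"
  have "inj ?g" using inj_compose[OF inj_hole_ren[OF inj_swp] h(1)] by (simp add: comp_def)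
  moreover have e: "ren (swp (ar \<mu>)) (plug C' (ren g Q')) = plug (ren_ctx (swp (ar \<mu>)) C') (ren ?g Q')"
    for Q'
    by (simp add: ren_plug ren_ren)
  moreover have "step (plug (CRes C) Q) \<mu> (plug (CRes (ren_ctx (swp (ar \<mu>)) C')) (ren ?g Q'))"
    if "R Q Q'" for Q Q'
    using step_res[OF h(4)[OF that]] by (simp add: e)
  ultimately show ?thesis
    using h unfolding plug_step_via_def
    by (intro exI[of _ "CRes (ren_ctx (swp (ar \<mu>)) C')"] exI[of _ ?g] exI[of _ P']) auto
qed

lemma step_plug_cases:
  "step (plug C P) \<mu> X \<Longrightarrow>
     plug_step_via (=) C \<mu> P X
   \<or> (\<exists>\<nu>. \<nu> \<noteq> Tau \<and> plug_step_via (\<lambda>Q Q'. step Q \<nu> Q') C \<mu> P X)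
   \<or> (\<mu> = Tau \<and> (\<exists>P'. step P Tau P' \<and> X = plug C P'))"
proof (induction C arbitrary: \<mu> X)
  case CHole
  then show ?case
    by (cases "\<mu> = Tau")
      (auto simp: plug_step_via_def intro!: exI[of _ CHole] exI[of _ "\<lambda>i. i"])
next
  case (CParL C S)
  from step_PPar_cases[OF CParL.prems[simplified]] show ?case
  proof (elim disjE exE conjE)
    fix Y assume "step (plug C P) \<mu> Y" and X: "X = PPar Y (ren (\<lambda>i. i + ar \<mu>) S)"
    from CParL.IH[OF this(1)] show ?case
      unfolding X by (elim disjE exE conjE) (auto intro: plug_step_via_ParL)
  next
    fix S' assume s: "step S \<mu> S'" and X: "X = PPar (ren (\<lambda>i. i + ar \<mu>) (plug C P)) S'"
    have "plug_step_via (=) (CParL C S) \<mu> P X"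
      unfolding plug_step_via_def X ren_plug
      by (intro exI[of _ "CParL (ren_ctx (\<lambda>i. i + ar \<mu>) C) S'"] exI[of _ "hole_ren C (\<lambda>i. i + ar \<mu>)"])
        (simp add: inj_hole_ren inj_shift ren_plug[symmetric] step.s_parr[OF s])
    then show ?case by blast
  next
    fix \<nu> Y S' assume "\<mu> = Tau" "\<nu> \<noteq> Tau" "step (plug C P) \<nu> Y" "step S (dual_act \<nu>) S'"
      and X: "X = resn (ar \<nu>) (PPar Y S')"
    from CParL.IH[OF this(3)] show ?case
      unfolding X using \<open>\<mu> = Tau\<close> \<open>\<nu> \<noteq> Tau\<close> \<open>step S (dual_act \<nu>) S'\<close>
      by (elim disjE exE conjE) (auto intro: plug_step_via_CommL)
  qed
next
  case (CParR S C)
  from step_PPar_cases[OF CParR.prems[simplified]] show ?case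
  proof (elim disjE exE conjE)
    fix S' assume s: "step S \<mu> S'" and X: "X = PPar S' (ren (\<lambda>i. i + ar \<mu>) (plug C P))"
    have "plug_step_via (=) (CParR S C) \<mu> P X"
      unfolding plug_step_via_def X ren_plug
      by (intro exI[of _ "CParR S' (ren_ctx (\<lambda>i. i + ar \<mu>) C)"] exI[of _ "hole_ren C (\<lambda>i. i + ar \<mu>)"])
        (simp add: inj_hole_ren inj_shift ren_plug[symmetric] step.s_parl[OF s])
    then show ?case by blast
  next
    fix Y assume "step (plug C P) \<mu> Y" and X: "X = PPar (ren (\<lambda>i. i + ar \<mu>) S) Y"
    from CParR.IH[OF this(1)] show ?case
      unfolding X by (elim disjE exE conjE) (auto intro: plug_step_via_ParR)
  next
    fix \<nu> S' Y assume "\<mu> = Tau" "\<nu> \<noteq> Tau" "step S \<nu> S'" "step (plug C P) (dual_act \<nu>) Y"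
      and X: "X = resn (ar \<nu>) (PPar S' Y)"
    have "dual_act \<nu> \<noteq> Tau" using \<open>\<nu> \<noteq> Tau\<close> by (cases \<nu>) auto
    from CParR.IH[OF \<open>step (plug C P) (dual_act \<nu>) Y\<close>] show ?case
      unfolding X using \<open>\<mu> = Tau\<close> \<open>\<nu> \<noteq> Tau\<close> \<open>step S \<nu> S'\<close> \<open>dual_act \<nu> \<noteq> Tau\<close>
      by (elim disjE exE conjE) (auto intro: plug_step_via_CommR)
  qed
next
  case (CRes C)
  from step_PRes_cases[OF CRes.prems[simplified]] obtain Y where
    "step (plug C P) (ren_act Suc \<mu>) Y" and X: "X = PRes (ren (swp (ar \<mu>)) Y)" by blast
  from CRes.IH[OF this(1)] show ?case
    unfolding X by (elim disjE exE conjE) (auto intro: plug_step_via_Res)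
qed

abbreviation tau_steps :: "'s pr \<Rightarrow> 's pr \<Rightarrow> bool" where
  "tau_steps \<equiv> (\<lambda>P Q. step P Tau Q)\<^sup>*\<^sup>*"

lemma wtr_tau_steps: "tau_steps P Q \<Longrightarrow> wtr Q s \<Longrightarrow> wtr P s"
  by (induction rule: converse_rtranclp_induct) (auto intro: wtr_tau)

lemma wf_pr_tau_steps: "tau_steps P Q \<Longrightarrow> wf_pr vs P \<Longrightarrow> wf_pr vs Q"
  by (induction rule: rtranclp_induct) (auto intro: step_wf_pr)

lemma wtr_Cons_inv: "wtr P (\<nu> # t) \<Longrightarrow> \<exists>P1 P2. tau_steps P P1 \<and> step P1 \<nu> P2 \<and> wtr P2 t"
proof (induction P "\<nu> # t" rule: wtr.induct)
  case (wtr_tau P Q)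
  then show ?case by (meson converse_rtranclp_into_rtranclp)
qed auto

lemma step_plug_Tau: "step Q Tau Q' \<Longrightarrow> step (plug C Q) Tau (plug C Q')"
proof (induction C)
  case (CParL C R)
  then show ?case using step.s_parl[of "plug C Q" Tau "plug C Q'" R] by simp
next
  case (CParR R C)
  then show ?case using step.s_parr[of "plug C Q" Tau "plug C Q'" R] by simp
qed (auto intro: step.s_res_tau)

lemma tau_steps_plug: "tau_steps Q Q' \<Longrightarrow> tau_steps (plug C Q) (plug C Q')"
  by (induction rule: rtranclp_induct) (auto intro: step_plug_Tau rtranclp.rtrancl_into_rtrancl)

lemma wtr_plug_factor:
  "wtr (plug C P) s \<Longrightarrow> wf_pr no_vars P
   \<Longrightarrow> \<exists>t. wtr P t \<and> (\<forall>Q. wf_pr no_vars Q \<longrightarrow> wtr Q t \<longrightarrow> wtr (plug C Q) s)"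
proof (induction "plug C P" s arbitrary: C P rule: wtr_step_induct)
  case Nil
  then show ?case by (auto intro: wtr_nil)
next
  case (Step \<mu> X s)
  have through_ren: "\<exists>t0. wtr P0 t0 \<and> (\<forall>Q. wf_pr no_vars Q \<longrightarrow> wtr Q t0 \<longrightarrow> wtr (plug C' (ren g Q)) s)"
    if "X = plug C' (ren g P0)" "inj g" "wf_pr no_vars P0" for C' g P0
  proof -
    from Step.hyps(3)[OF that(1)] that(2,3) obtain t' where t': "wtr (ren g P0) t'"
      "\<forall>Q. wf_pr no_vars Q \<longrightarrow> wtr Q t' \<longrightarrow> wtr (plug C' Q) s"
      using wf_pr_ren by blast
    from wtr_ren_inv[OF t'(1) that(2,3)] obtain t0 where "wtr P0 t0" "t' = ren_trace g t0" by blast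
    with t'(2) that(2) show ?thesis using wtr_ren wf_pr_ren by blast
  qed
  from step_plug_cases[OF Step.hyps(1)] show ?case
  proof (elim disjE exE conjE)
    assume "plug_step_via (=) C \<mu> P X"
    then obtain C' g where h: "inj g" "X = plug C' (ren g P)"
      "\<And>Q. step (plug C Q) \<mu> (plug C' (ren g Q))"
      unfolding plug_step_via_def by blast
    from through_ren[OF h(2,1) Step.prems] obtain t0 where
      "wtr P t0" "\<forall>Q. wf_pr no_vars Q \<longrightarrow> wtr Q t0 \<longrightarrow> wtr (plug C' (ren g Q)) s" by blast
    with h(3) show ?case by (blast intro: wtr_stepI)
  next
    fix \<nu> assume "\<nu> \<noteq> Tau" "plug_step_via (\<lambda>Q Q'. step Q \<nu> Q') C \<mu> P X"
    then obtain C' g P' where h: "inj g" "step P \<nu> P'" "X = plug C' (ren g P')"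
      "\<And>Q Q'. step Q \<nu> Q' \<Longrightarrow> step (plug C Q) \<mu> (plug C' (ren g Q'))"
      unfolding plug_step_via_def by blast
    from through_ren[OF h(3,1)] h(2) Step.prems obtain t0 where t0: "wtr P' t0"
      "\<forall>Q. wf_pr no_vars Q \<longrightarrow> wtr Q t0 \<longrightarrow> wtr (plug C' (ren g Q)) s"
      using step_wf_pr by blast
    show ?case
    proof (intro exI conjI allI impI)
      show "wtr P (\<nu> # t0)" using h(2) \<open>\<nu> \<noteq> Tau\<close> t0(1) by (rule wtr_vis)
    next
      fix Q :: "'a pr" assume "wf_pr no_vars Q" "wtr Q (\<nu> # t0)"
      moreover from wtr_Cons_inv[OF this(2)] obtain Q1 Q2 where
        "tau_steps Q Q1" "step Q1 \<nu> Q2" "wtr Q2 t0" by blast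
      ultimately show "wtr (plug C Q) (visible \<mu> @ s)"
        using t0(2) h(4) wf_pr_tau_steps step_wf_pr tau_steps_plug wtr_tau_steps wtr_stepI by metis
    qed
  next
    fix P' assume "\<mu> = Tau" "step P Tau P'" "X = plug C P'"
    moreover from this Step.hyps(3) Step.prems obtain t where
      "wtr P' t" "\<forall>Q. wf_pr no_vars Q \<longrightarrow> wtr Q t \<longrightarrow> wtr (plug C Q) s"
      using step_wf_pr by blast
    ultimately show ?case by (auto simp: visible_def intro: wtr_tau)
  qed
qed

lemma tr_le_plug:
  "wf_pr no_vars P \<Longrightarrow> wf_pr no_vars Q \<Longrightarrow> tr_le P Q \<Longrightarrow> tr_le (plug C P) (plug C Q)"
  unfolding tr_le_def using wtr_plug_factor by blast

lemma tr_le_refl: "tr_le P P"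
  by (simp add: tr_le_def)

lemma tr_le_trans: "tr_le P Q \<Longrightarrow> tr_le Q R \<Longrightarrow> tr_le P R"
  by (simp add: tr_le_def)

lemma tr_le_PPar:
  "wf_pr no_vars A \<Longrightarrow> wf_pr no_vars A' \<Longrightarrow> wf_pr no_vars B \<Longrightarrow> wf_pr no_vars B' \<Longrightarrow>
   tr_le A A' \<Longrightarrow> tr_le B B' \<Longrightarrow> tr_le (PPar A B) (PPar A' B')"
  using tr_le_plug[of A A' "CParL CHole B"] tr_le_plug[of B B' "CParR A' CHole"]
  by (auto intro: tr_le_trans)

lemma tr_le_PRes: "wf_pr no_vars A \<Longrightarrow> wf_pr no_vars A' \<Longrightarrow> tr_le A A' \<Longrightarrow> tr_le (PRes A) (PRes A')"
  using tr_le_plug[of A A' "CRes CHole"] by simp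

section \<open>Substitution into guarded expressions\<close>

lemma guarded_ren: "guarded P \<Longrightarrow> guarded (ren f P)"
  by (induction P arbitrary: f) auto

lemma step_substV:
  "step U \<mu> U' \<Longrightarrow> wf_pr vs U \<Longrightarrow> wf_subst vs H \<Longrightarrow> step (substV H U) \<mu> (substV H U')"
proof (induction rule: step_induct)
  case (In a k P)
  then show ?case by (simp add: step.s_in)
next
  case (Out a k P)
  then show ?case by (simp add: step.s_out)
next
  case (Rep a k P)
  have "ren (\<lambda>i. i + k) (substV H (PRep a k P)) = substV H (ren (\<lambda>i. i + k) (PRep a k P))"
    using ren_substV Rep by blast
  then show ?case using step.s_rep[of a k "substV H P"] by simp
next
  case (ParL P \<mu> P' R)
  then have e: "ren (\<lambda>i. i + ar \<mu>) (substV H R) = substV H (ren (\<lambda>i. i + ar \<mu>) R)"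
    and s: "step (substV H P) \<mu> (substV H P')"
    using ren_substV by (blast elim: wf_prE)+
  from step.s_parl[OF s, of "substV H R"] show ?case by (simp add: e)
next
  case (ParR R \<mu> R' P)
  then have e: "ren (\<lambda>i. i + ar \<mu>) (substV H P) = substV H (ren (\<lambda>i. i + ar \<mu>) P)"
    and s: "step (substV H R) \<mu> (substV H R')"
    using ren_substV by (blast elim: wf_prE)+
  from step.s_parr[OF s, of "substV H P"] show ?case by (simp add: e)
next
  case (Comm P \<nu> P' R R')
  then show ?case using step_comm by (fastforce elim: wf_prE simp: substV_resn)
next
  case (Res P \<mu> P')
  then have "wf_pr vs P'" using step_wf_pr by (blast elim: wf_prE)
  then have "ren (swp (ar \<mu>)) (substV H P') = substV H (ren (swp (ar \<mu>)) P')"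
    using ren_substV Res by blast
  with Res show ?case using step_res by (fastforce elim: wf_prE)
next
  case (Sol E i xs \<mu> P')
  then have "wf_pr no_vars P'" using wf_pr_unfold_sol step_wf_pr by blast
  with Sol show ?case by (simp add: substV_no_vars step.s_sol)
qed

lemma step_substV_guarded_inv:
  "guarded U \<Longrightarrow> wf_pr vs U \<Longrightarrow> wf_subst vs H \<Longrightarrow> step (substV H U) \<mu> X
   \<Longrightarrow> \<exists>U'. step U \<mu> U' \<and> X = substV H U'"
proof (induction U arbitrary: \<mu> X)
  case PNil
  then show ?case by (auto elim: step_PNilE)
next
  case (PIn a k P)
  then show ?case by (auto elim!: step_PInE intro: step.s_in)
next
  case (POut a k P)
  then show ?case by (auto elim!: step_POutE intro: step.s_out)
next
  case (PRep a k P)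
  then have X: "X = PPar (substV H P) (ren (\<lambda>i. i + k) (PRep a k (substV H P)))" "\<mu> = InA a k"
    by (auto elim: step_PRepE)
  have "ren (\<lambda>i. i + k) (substV H (PRep a k P)) = substV H (ren (\<lambda>i. i + k) (PRep a k P))"
    using ren_substV PRep by blast
  then show ?case using X step.s_rep by fastforce
next
  case (PRes P)
  from step_PRes_cases[OF PRes.prems(4)[simplified]] obtain Y where
    Y: "step (substV H P) (ren_act Suc \<mu>) Y" "X = PRes (ren (swp (ar \<mu>)) Y)" by blast
  from PRes.IH[OF _ _ PRes.prems(3) Y(1)] PRes.prems(1,2) obtain U' where
    U': "step P (ren_act Suc \<mu>) U'" "Y = substV H U'"
    by (auto elim: wf_prE)
  have "wf_pr vs U'" using U'(1) PRes.prems(2) step_wf_pr by (blast elim: wf_prE)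
  then have "ren (swp (ar \<mu>)) (substV H U') = substV H (ren (swp (ar \<mu>)) U')"
    using ren_substV PRes.prems(3) by blast
  then show ?case using Y U' step_res by fastforce
next
  case (PPar P Q)
  have wf: "wf_pr vs P" "wf_pr vs Q" using PPar.prems(2) by (auto elim: wf_prE)
  note IH1 = PPar.IH(1)[OF _ wf(1) PPar.prems(3)] and IH2 = PPar.IH(2)[OF _ wf(2) PPar.prems(3)]
  have IH: "\<exists>U'. step P \<mu> U' \<and> X = substV H U'" if "step (substV H P) \<mu> X" for \<mu> X
    using IH1 that PPar.prems(1) by simp
  have IH': "\<exists>U'. step Q \<mu> U' \<and> X = substV H U'" if "step (substV H Q) \<mu> X" for \<mu> X
    using IH2 that PPar.prems(1) by simp
  from step_PPar_cases[OF PPar.prems(4)[simplified]] show ?case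
  proof (elim disjE exE conjE)
    fix P' assume h: "step (substV H P) \<mu> P'" "X = PPar P' (ren (\<lambda>i. i + ar \<mu>) (substV H Q))"
    moreover from IH[OF h(1)] obtain U' where "step P \<mu> U'" "P' = substV H U'" by blast
    moreover have "ren (\<lambda>i. i + ar \<mu>) (substV H Q) = substV H (ren (\<lambda>i. i + ar \<mu>) Q)"
      using ren_substV wf PPar.prems(3) by blast
    ultimately show ?case using step.s_parl by fastforce
  next
    fix Q' assume h: "step (substV H Q) \<mu> Q'" "X = PPar (ren (\<lambda>i. i + ar \<mu>) (substV H P)) Q'"
    moreover from IH'[OF h(1)] obtain U' where "step Q \<mu> U'" "Q' = substV H U'" by blast
    moreover have "ren (\<lambda>i. i + ar \<mu>) (substV H P) = substV H (ren (\<lambda>i. i + ar \<mu>) P)"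
      using ren_substV wf PPar.prems(3) by blast
    ultimately show ?case using step.s_parr by fastforce
  next
    fix \<nu> P' Q' assume h: "\<mu> = Tau" "\<nu> \<noteq> Tau" "step (substV H P) \<nu> P'"
      "step (substV H Q) (dual_act \<nu>) Q'" "X = resn (ar \<nu>) (PPar P' Q')"
    moreover from IH[OF h(3)] IH'[OF h(4)] obtain U1 U2 where "step P \<nu> U1" "P' = substV H U1"
      "step Q (dual_act \<nu>) U2" "Q' = substV H U2" by blast
    ultimately show ?case using step_comm by (fastforce simp: substV_resn)
  qed
next
  case (PVar i xs)
  then show ?case by simp
next
  case (PSol E i xs)
  then have "step (unfold_sol E i xs) \<mu> X" by (auto elim: step_PSolE)
  then have "wf_pr no_vars X" using PSol.prems(2) wf_pr_unfold_sol step_wf_pr by blast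
  then have "X = substV H X" by (simp add: substV_no_vars)
  then show ?case using PSol.prems(4) by auto
qed

inductive unfold_eq :: "'s pr \<Rightarrow> 's pr \<Rightarrow> bool" where
  ue_refl: "unfold_eq A A"
| ue_solL: "wf_pr no_vars (PSol E i xs) \<Longrightarrow> unfold_eq (unfold_sol E i xs) B \<Longrightarrow> unfold_eq (PSol E i xs) B"
| ue_solR: "wf_pr no_vars (PSol E i xs) \<Longrightarrow> unfold_eq A (unfold_sol E i xs) \<Longrightarrow> unfold_eq A (PSol E i xs)"
| ue_in: "unfold_eq A B \<Longrightarrow> unfold_eq (PIn a k A) (PIn a k B)"
| ue_out: "unfold_eq A B \<Longrightarrow> unfold_eq (POut a k A) (POut a k B)"
| ue_rep: "unfold_eq A B \<Longrightarrow> unfold_eq (PRep a k A) (PRep a k B)"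
| ue_res: "unfold_eq A B \<Longrightarrow> unfold_eq (PRes A) (PRes B)"
| ue_par: "unfold_eq A1 B1 \<Longrightarrow> unfold_eq A2 B2 \<Longrightarrow> unfold_eq (PPar A1 A2) (PPar B1 B2)"

lemma unfold_eq_sym: "unfold_eq A B \<Longrightarrow> unfold_eq B A"
  by (induction rule: unfold_eq.induct) (auto intro: unfold_eq.intros)

lemma unfold_eq_ren: "unfold_eq A B \<Longrightarrow> unfold_eq (ren f A) (ren f B)"
proof (induction A B arbitrary: f rule: unfold_eq.induct)
  case (ue_solL E i xs B)
  then have "wf_pr no_vars (PSol E i (map f xs))" by (auto elim!: wf_prE intro!: wf_pr.intros)
  with ue_solL show ?case by (auto simp: ren_unfold_sol intro: unfold_eq.ue_solL)
next
  case (ue_solR E i xs A)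
  then have "wf_pr no_vars (PSol E i (map f xs))" by (auto elim!: wf_prE intro!: wf_pr.intros)
  with ue_solR show ?case by (auto simp: ren_unfold_sol intro: unfold_eq.ue_solR)
qed (auto intro: unfold_eq.intros)

lemma unfold_eq_resn: "unfold_eq A B \<Longrightarrow> unfold_eq (resn k A) (resn k B)"
  by (induction k) (auto intro: unfold_eq.intros)

lemma unfold_eq_step: "unfold_eq A B \<Longrightarrow> step A \<mu> A' \<Longrightarrow> \<exists>B'. step B \<mu> B' \<and> unfold_eq A' B'"
proof (induction A B arbitrary: \<mu> A' rule: unfold_eq.induct)
  case (ue_refl A)
  then show ?case by (auto intro: unfold_eq.ue_refl)
next
  case (ue_solL E i xs B)
  then show ?case by (auto elim: step_PSolE)
next
  case (ue_solR E i xs A)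
  then show ?case using step.s_sol by blast
next
  case (ue_in A B a k)
  then show ?case by (auto elim!: step_PInE intro: step.s_in)
next
  case (ue_out A B a k)
  then show ?case by (auto elim!: step_POutE intro: step.s_out)
next
  case (ue_rep A B a k)
  then show ?case by (auto elim!: step_PRepE intro!: step.s_rep ue_par unfold_eq_ren unfold_eq.ue_rep)
next
  case (ue_res A B)
  from step_PRes_cases[OF ue_res.prems] obtain P' where
    "step A (ren_act Suc \<mu>) P'" "A' = PRes (ren (swp (ar \<mu>)) P')" by blast
  with ue_res.IH show ?case by (blast intro: step_res unfold_eq.ue_res unfold_eq_ren)
next
  case (ue_par A1 B1 A2 B2)
  from step_PPar_cases[OF ue_par.prems] show ?case
  proof (elim disjE exE conjE)
    fix P' assume "step A1 \<mu> P'" "A' = PPar P' (ren (\<lambda>i. i + ar \<mu>) A2)"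
    with ue_par show ?case by (blast intro: step.s_parl unfold_eq.ue_par unfold_eq_ren)
  next
    fix P' assume "step A2 \<mu> P'" "A' = PPar (ren (\<lambda>i. i + ar \<mu>) A1) P'"
    with ue_par show ?case by (blast intro: step.s_parr unfold_eq.ue_par unfold_eq_ren)
  next
    fix \<nu> P' Q' assume "\<mu> = Tau" "\<nu> \<noteq> Tau" "step A1 \<nu> P'" "step A2 (dual_act \<nu>) Q'"
      "A' = resn (ar \<nu>) (PPar P' Q')"
    with ue_par.IH show ?case by (blast intro: step_comm unfold_eq.ue_par unfold_eq_resn)
  qed
qed

lemma unfold_eqs_step:
  "unfold_eq\<^sup>*\<^sup>* A B \<Longrightarrow> step A \<mu> A' \<Longrightarrow> \<exists>B'. step B \<mu> B' \<and> unfold_eq\<^sup>*\<^sup>* A' B'"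
proof (induction arbitrary: A' rule: rtranclp_induct)
  case (step B C)
  then obtain B' where "step B \<mu> B'" "unfold_eq\<^sup>*\<^sup>* A' B'" by blast
  with unfold_eq_step[OF step.hyps(2)] show ?case by (meson rtranclp.rtrancl_into_rtrancl)
qed blast

section \<open>Non-divergence and weak traces\<close>

definition trace_pred :: "'s pr \<times> act list \<Rightarrow> 's pr \<times> act list \<Rightarrow> bool" where
  "trace_pred y x \<longleftrightarrow> (\<exists>\<mu>. step (fst x) \<mu> (fst y) \<and> snd x = visible \<mu> @ snd y)"

text \<open>An infinite descending \<open>trace_pred\<close>-chain can consume only finitely many visible
  actions of the trace, so from some point on all its transitions are \<open>\<tau>\<close>.\<close>

lemma accp_trace_pred:
  assumes "\<not> diverges P"
  shows "Wellfounded.accp trace_pred (P, s)"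
proof (rule ccontr)
  assume not_acc: "\<not> Wellfounded.accp trace_pred (P, s)"
  have "\<exists>f. \<forall>n. (\<not> Wellfounded.accp trace_pred (f n) \<and> (n = 0 \<longrightarrow> f n = (P, s)))
      \<and> trace_pred (f (Suc n)) (f n)"
  proof (rule dependent_nat_choice)
    show "\<exists>x. \<not> Wellfounded.accp trace_pred x \<and> ((0::nat) = 0 \<longrightarrow> x = (P, s))"
      using not_acc by blast
  next
    fix x and n :: nat assume "\<not> Wellfounded.accp trace_pred x \<and> (n = 0 \<longrightarrow> x = (P, s))"
    then obtain y where "trace_pred y x" "\<not> Wellfounded.accp trace_pred y"
      by (blast elim: not_accp_down)
    then show "\<exists>y. (\<not> Wellfounded.accp trace_pred y \<and> (Suc n = 0 \<longrightarrow> y = (P, s)))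
        \<and> trace_pred y x" by blast
  qed
  then obtain f where f0: "f 0 = (P, s)" and f: "\<And>n. trace_pred (f (Suc n)) (f n)" by blast
  then have "\<forall>n. \<exists>\<mu>. step (fst (f n)) \<mu> (fst (f (Suc n))) \<and> snd (f n) = visible \<mu> @ snd (f (Suc n))"
    unfolding trace_pred_def by blast
  then obtain l where l: "\<And>n. step (fst (f n)) (l n) (fst (f (Suc n)))"
    "\<And>n. snd (f n) = visible (l n) @ snd (f (Suc n))"
    by (metis choice)
  define m where "m n = length (snd (f n))" for n
  have m_Suc: "m n = length (visible (l n)) + m (Suc n)" for n
    using l(2)[of n] by (simp add: m_def)
  then have m_antimono: "m (Suc n) \<le> m n" for n
    by (metis le_add2)
  obtain N where N: "\<And>n. m N \<le> m n"
    using ex_has_least_nat[of "\<lambda>_. True" 0 m] by blast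
  have "l n = Tau" if "N \<le> n" for n
  proof -
    have "m n \<le> m N" using lift_Suc_antimono_le[of m, OF m_antimono that] .
    then have "length (visible (l n)) = 0" using N[of "Suc n"] m_Suc[of n] by linarith
    then show ?thesis by (simp add: visible_def split: if_splits)
  qed
  then have "diverges P"
    unfolding diverges_def using f0 l(1)
    by (intro exI[of _ "\<lambda>n. fst (f n)"] exI[of _ l]) auto
  with assms show False by blast
qed

section \<open>Guarded systems\<close>

text \<open>An injective renaming agreeing with \<open>\<lambda>n. xs ! n\<close> on the parameters, so that unfolding
  an equation variable stays within the injective renamings that preserve traces.\<close>

definition extend_nth :: "nat list \<Rightarrow> nat \<Rightarrow> nat" where
  "extend_nth xs n = (if n < length xs then xs ! n else Suc (Max (insert 0 (set xs))) + n)"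

lemma inj_extend_nth:
  assumes "distinct xs"
  shows "inj (extend_nth xs)"
proof (rule injI)
  fix x y assume e: "extend_nth xs x = extend_nth xs y"
  let ?M = "Max (insert 0 (set xs))"
  have below: "xs ! n \<le> ?M" if "n < length xs" for n
    using that by simp
  show "x = y"
  proof (cases "x < length xs"; cases "y < length xs")
    assume "x < length xs" "y < length xs"
    then show ?thesis using e assms by (simp add: extend_nth_def nth_eq_iff_index_eq)
  next
    assume "x < length xs" "\<not> y < length xs"
    then have "xs ! x = Suc (?M + y)" using e by (simp add: extend_nth_def)
    with below[of x] \<open>x < length xs\<close> show ?thesis by linarith
  next
    assume "\<not> x < length xs" "y < length xs"
    then have "xs ! y = Suc (?M + x)" using e by (simp add: extend_nth_def)
    with below[of y] \<open>y < length xs\<close> show ?thesis by linarith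
  qed (use e in \<open>simp add: extend_nth_def\<close>)
qed

lemma ren_nth_eq_extend_nth: "names_below (length xs) P \<Longrightarrow> ren (\<lambda>n. xs ! n) P = ren (extend_nth xs) P"
  by (rule ren_cong) (auto simp: extend_nth_def)

primrec unfold_vars :: "(nat \<Rightarrow> 's abs) \<Rightarrow> 's pr \<Rightarrow> 's pr" where
  "unfold_vars E PNil = PNil"
| "unfold_vars E (PIn a k P) = PIn a k P"
| "unfold_vars E (POut a k P) = POut a k P"
| "unfold_vars E (PRep a k P) = PRep a k P"
| "unfold_vars E (PRes P) = PRes (unfold_vars E P)"
| "unfold_vars E (PPar P Q) = PPar (unfold_vars E P) (unfold_vars E Q)"
| "unfold_vars E (PVar j xs) = ren (extend_nth xs) (snd (E j))"
| "unfold_vars E (PSol E' i xs) = PSol E' i xs"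

definition var_arity :: "nat set \<Rightarrow> (nat \<Rightarrow> 's abs) \<Rightarrow> nat \<Rightarrow> nat option" where
  "var_arity I E j = map_option length (vsys I E j)"

lemma var_arity_eq_Some: "var_arity I E j = Some m \<longleftrightarrow> j \<in> I \<and> m = length (fst (E j))"
  by (auto simp: var_arity_def vsys_def)

lemma wf_subst_closed_abs:
  assumes "\<forall>j\<in>I. closed_abs ob (F j) (fst (E j))"
  shows "wf_subst (var_arity I E) F"
  unfolding wf_subst_def
proof (intro allI impI)
  fix j m assume "var_arity I E j = Some m"
  then have j: "j \<in> I" "m = length (fst (E j))" by (auto simp: var_arity_eq_Some)
  with assms have "wt ob (\<lambda>_. None) (fst (E j)) (snd (F j))" by (auto simp: closed_abs_def)
  from wt_imp_wf_pr[OF this] j show "wf_pr no_vars (snd (F j)) \<and> names_below m (snd (F j))" by simp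
qed

locale guarded_system =
  fixes I :: "nat set" and E :: "nat \<Rightarrow> 's abs"
  assumes wf_eq: "i \<in> I \<Longrightarrow> wf_pr (var_arity I E) (snd (E i))"
    and names_below_eq: "i \<in> I \<Longrightarrow> names_below (length (fst (E i))) (snd (E i))"
    and guarded_eq: "i \<in> I \<Longrightarrow> guarded (snd (E i))"
begin

lemma wf_sysfun: "wf_pr (\<lambda>j. Some (length (fst (sysfun I E j)))) (snd (sysfun I E j))
   \<and> names_below (length (fst (sysfun I E j))) (snd (sysfun I E j))"
proof (cases "j \<in> I")
  case True
  have "wf_pr (\<lambda>j. Some (length (fst (sysfun I E j)))) (snd (E j))"
    by (rule wf_pr_mono[OF wf_eq[OF True]]) (auto simp: var_arity_eq_Some sysfun_def)
  with True names_below_eq show ?thesis by (simp add: sysfun_def)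
qed (simp add: sysfun_def wf_nil)

lemma wf_pr_synsol_app: "length xs = length (fst (E j)) \<Longrightarrow> j \<in> I \<Longrightarrow> wf_pr vs (PSol (sysfun I E) j xs)"
  using wf_sysfun by (auto simp: sysfun_def intro!: wf_sol)

lemma wf_subst_synsol: "wf_subst (var_arity I E) (synsol I E)"
  by (auto simp: wf_subst_def var_arity_eq_Some synsol_def intro: wf_pr_synsol_app)

lemma substV_synsol_PVar:
  "length xs = length (fst (E j)) \<Longrightarrow> substV (synsol I E) (PVar j xs) = PSol (sysfun I E) j xs"
proof -
  assume "length xs = length (fst (E j))"
  then have "map (\<lambda>n. xs ! n) [0..<length (fst (E j))] = xs" by (metis map_nth)
  then show ?thesis by (simp add: synsol_def)
qed

lemma unfold_sol_synsol:
  assumes "j \<in> I" "length xs = length (fst (E j))"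
  shows "unfold_sol (sysfun I E) j xs = ren (extend_nth xs) (substV (synsol I E) (snd (E j)))"
proof -
  have "substV (const_subst (sysfun I E)) (snd (E j)) = substV (synsol I E) (snd (E j))"
    by (rule substV_cong[OF wf_eq[OF assms(1)]])
      (auto simp: var_arity_eq_Some const_subst_def synsol_def sysfun_def)
  moreover have "names_below (length xs) (substV (synsol I E) (snd (E j)))"
    using names_below_substV[OF wf_eq wf_subst_synsol names_below_eq] assms by simp
  ultimately show ?thesis
    using assms(1) by (simp add: unfold_sol_eq sysfun_def ren_nth_eq_extend_nth)
qed

lemma wf_guarded_unfold_vars:
  "wf_pr (var_arity I E) T \<Longrightarrow> wf_pr (var_arity I E) (unfold_vars E T) \<and> guarded (unfold_vars E T)"
proof (induction "var_arity I E" T rule: wf_pr.induct)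
  case (wf_var i xs)
  then have i: "i \<in> I" by (simp add: var_arity_eq_Some)
  have "wf_pr (var_arity I E) (ren (extend_nth xs) (snd (E i)))"
    using wf_pr_ren[OF wf_eq[OF i]] inj_extend_nth[OF wf_var.hyps(2)] by blast
  moreover have "guarded (ren (extend_nth xs) (snd (E i)))"
    using guarded_ren guarded_eq[OF i] by blast
  ultimately show ?case by simp
qed (auto intro: wf_pr.intros)

lemma unfold_eq_unfold_vars:
  "wf_pr (var_arity I E) T \<Longrightarrow> unfold_eq (substV (synsol I E) T) (substV (synsol I E) (unfold_vars E T))"
proof (induction "var_arity I E" T rule: wf_pr.induct)
  case (wf_var i xs)
  then have i: "i \<in> I" "length xs = length (fst (E i))" by (auto simp: var_arity_eq_Some)
  have "substV (synsol I E) (unfold_vars E (PVar i xs)) = unfold_sol (sysfun I E) i xs"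
    using ren_substV[OF wf_eq[OF i(1)] wf_subst_synsol] unfold_sol_synsol[OF i] by simp
  then show ?case
    unfolding substV_synsol_PVar[OF i(2)]
    by (simp add: ue_solL ue_refl wf_pr_synsol_app i)
qed (auto intro: unfold_eq.intros)

text \<open>Unfolding the variables of \<open>T\<close> moves \<open>T[H]\<close> in the direction of any precongruence
  \<open>R\<close> along which \<open>H\<close> is a pre-fixed point; instantiated below with \<open>\<sqsubseteq>\<^sub>t\<^sub>r\<close> and its converse.\<close>

lemma unfold_vars_rel:
  assumes refl: "\<And>P. R P P"
    and ren: "\<And>f P Q. inj f \<Longrightarrow> wf_pr no_vars P \<Longrightarrow> wf_pr no_vars Q \<Longrightarrow> R P Q \<Longrightarrow> R (ren f P) (ren f Q)"
    and par: "\<And>A A' B B'. wf_pr no_vars A \<Longrightarrow> wf_pr no_vars A' \<Longrightarrow> wf_pr no_vars B \<Longrightarrow> wf_pr no_vars B'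
                \<Longrightarrow> R A A' \<Longrightarrow> R B B' \<Longrightarrow> R (PPar A B) (PPar A' B')"
    and res: "\<And>A A'. wf_pr no_vars A \<Longrightarrow> wf_pr no_vars A' \<Longrightarrow> R A A' \<Longrightarrow> R (PRes A) (PRes A')"
    and H: "wf_subst (var_arity I E) H" "\<And>j. j \<in> I \<Longrightarrow> R (substV H (snd (E j))) (snd (H j))"
  shows "wf_pr (var_arity I E) T \<Longrightarrow> R (substV H (unfold_vars E T)) (substV H T)"
proof (induction "var_arity I E" T rule: wf_pr.induct)
  case (wf_var i xs)
  then have i: "i \<in> I" "length xs = length (fst (E i))" by (auto simp: var_arity_eq_Some)
  have Hi: "wf_pr no_vars (snd (H i))" "names_below (length xs) (snd (H i))"
    using H(1) i unfolding wf_subst_def by (auto simp: var_arity_eq_Some)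
  have "substV H (unfold_vars E (PVar i xs)) = ren (extend_nth xs) (substV H (snd (E i)))"
    using ren_substV[OF wf_eq[OF i(1)] H(1)] by simp
  moreover have "substV H (PVar i xs) = ren (extend_nth xs) (snd (H i))"
    using ren_nth_eq_extend_nth[OF Hi(2)] by simp
  ultimately show ?case
    using ren[OF inj_extend_nth[OF wf_var.hyps(2)] wf_pr_substV[OF wf_eq[OF i(1)] H(1)] Hi(1) H(2)[OF i(1)]]
    by simp
next
  case (wf_par P Q)
  note wfH = wf_pr_substV[OF _ H(1), where vs' = no_vars]
  show ?case unfolding unfold_vars.simps substV.simps
    by (rule par[OF wfH wfH wfH wfH wf_par(2,4)]) (use wf_par.hyps wf_guarded_unfold_vars in auto)
next
  case (wf_res P)
  note wfH = wf_pr_substV[OF _ H(1), where vs' = no_vars]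
  show ?case unfolding unfold_vars.simps substV.simps
    by (rule res[OF wfH wfH wf_res(2)]) (use wf_res.hyps wf_guarded_unfold_vars in auto)
qed (auto simp: refl)

lemma wtr_substV_pre_fp:
  assumes G: "wf_subst (var_arity I E) G" "\<And>j. j \<in> I \<Longrightarrow> tr_le (substV G (snd (E j))) (snd (G j))"
  shows "wtr X s \<Longrightarrow> wf_pr (var_arity I E) T \<Longrightarrow> unfold_eq\<^sup>*\<^sup>* X (substV (synsol I E) T)
    \<Longrightarrow> wtr (substV G T) s"
proof (induction arbitrary: T rule: wtr_step_induct)
  case Nil
  show ?case by (rule wtr_nil)
next
  case (Step X \<mu> X' s)
  define U where "U = unfold_vars E T"
  have U: "wf_pr (var_arity I E) U" "guarded U"
    using wf_guarded_unfold_vars[OF Step.prems(1)] by (simp_all add: U_def)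
  have "unfold_eq\<^sup>*\<^sup>* X (substV (synsol I E) U)"
    using Step.prems unfold_eq_unfold_vars U_def by (meson rtranclp.rtrancl_into_rtrancl)
  from unfold_eqs_step[OF this Step.hyps(1)] obtain Y where
    Y: "step (substV (synsol I E) U) \<mu> Y" "unfold_eq\<^sup>*\<^sup>* X' Y" by blast
  from step_substV_guarded_inv[OF U(2,1) wf_subst_synsol Y(1)] obtain U' where
    U': "step U \<mu> U'" "Y = substV (synsol I E) U'" by blast
  have "wtr (substV G U') s"
    using Step.IH U' Y(2) step_wf_pr[OF U'(1) U(1)] by blast
  with step_substV[OF U'(1) U(1) G(1)] have "wtr (substV G U) (visible \<mu> @ s)"
    by (rule wtr_stepI)
  moreover have "tr_le (substV G U) (substV G T)"
    unfolding U_def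
    by (rule unfold_vars_rel[where R = tr_le, OF _ _ _ _ G Step.prems(1)])
      (auto intro: tr_le_refl tr_le_ren tr_le_PPar tr_le_PRes)
  ultimately show ?case by (simp add: tr_le_def)
qed

lemma wtr_substV_post_fp:
  assumes F: "wf_subst (var_arity I E) F" "\<And>j. j \<in> I \<Longrightarrow> tr_le (snd (F j)) (substV F (snd (E j)))"
  shows "Wellfounded.accp trace_pred (X, s) \<Longrightarrow> wf_pr (var_arity I E) T
    \<Longrightarrow> unfold_eq\<^sup>*\<^sup>* (substV (synsol I E) T) X \<Longrightarrow> wtr (substV F T) s \<Longrightarrow> wtr X s"
proof (induction "(X, s)" arbitrary: X s T rule: accp.induct)
  case accI
  define U where "U = unfold_vars E T"
  have U: "wf_pr (var_arity I E) U" "guarded U"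
    using wf_guarded_unfold_vars[OF accI.prems(1)] by (simp_all add: U_def)
  have eqU: "unfold_eq\<^sup>*\<^sup>* (substV (synsol I E) U) X"
    using accI.prems(2) unfold_eq_sym[OF unfold_eq_unfold_vars[OF accI.prems(1)]] U_def
    by (meson converse_rtranclp_into_rtranclp)
  have "tr_le (substV F T) (substV F U)"
    unfolding U_def
    by (rule unfold_vars_rel[where R = "\<lambda>P Q. tr_le Q P", OF _ _ _ _ F accI.prems(1)])
      (auto intro: tr_le_refl tr_le_ren tr_le_PPar tr_le_PRes)
  with accI.prems(3) have "wtr (substV F U) s" by (simp add: tr_le_def)
  from wtr_step_cases[OF this] show ?case
  proof (elim disjE exE conjE)
    assume "s = []"
    then show ?case by (simp add: wtr_nil)
  next
    fix \<mu> Y s' assume Y: "step (substV F U) \<mu> Y" "wtr Y s'" "s = visible \<mu> @ s'"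
    from step_substV_guarded_inv[OF U(2,1) F(1) Y(1)] obtain U' where
      U': "step U \<mu> U'" "Y = substV F U'" by blast
    from unfold_eqs_step[OF eqU step_substV[OF U'(1) U(1) wf_subst_synsol]] obtain X' where
      X': "step X \<mu> X'" "unfold_eq\<^sup>*\<^sup>* (substV (synsol I E) U') X'" by blast
    have "trace_pred (X', s') (X, s)" using X'(1) Y(3) by (auto simp: trace_pred_def)
    then have "wtr X' s'"
      using accI.hyps(2) step_wf_pr[OF U'(1) U(1)] X'(2) Y(2) U'(2) by blast
    with X'(1) show ?case unfolding Y(3) by (rule wtr_stepI)
  qed
qed

lemma tr_le_post_fp_pre_fp:
  assumes F: "wf_subst (var_arity I E) F" "\<And>j. j \<in> I \<Longrightarrow> tr_le (snd (F j)) (substV F (snd (E j)))"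
    and G: "wf_subst (var_arity I E) G" "\<And>j. j \<in> I \<Longrightarrow> tr_le (substV G (snd (E j))) (snd (G j))"
    and i: "i \<in> I" and nodiv: "\<not> diverges (snd (synsol I E i))"
  shows "tr_le (snd (F i)) (snd (G i))"
proof -
  define n where "n = length (fst (E i))"
  define T :: "'s pr" where "T = PVar i [0..<n]"
  have wfT: "wf_pr (var_arity I E) T"
    using i by (auto simp: T_def n_def var_arity_eq_Some intro!: wf_var)
  have K: "substV (synsol I E) T = snd (synsol I E i)"
    using substV_synsol_PVar[of "[0..<n]" i] by (simp add: T_def n_def synsol_def)
  have "names_below n (snd (F i))" "names_below n (snd (G i))"
    using F(1) G(1) i unfolding wf_subst_def by (auto simp: var_arity_eq_Some n_def)
  then have FG: "substV F T = snd (F i)" "substV G T = snd (G i)"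
    unfolding T_def by (simp_all add: ren_ident_below)
  show ?thesis unfolding tr_le_def
  proof (intro allI impI)
    fix s assume "wtr (snd (F i)) s"
    then have "wtr (snd (synsol I E i)) s"
      using wtr_substV_post_fp[OF F accp_trace_pred[OF nodiv] wfT] K FG by simp
    then show "wtr (snd (G i)) s"
      using wtr_substV_pre_fp[OF G _ wfT] K FG by simp
  qed
qed

end

lemma guarded_system_if_sys_ok:
  assumes "sys_ok ob I E" "guarded_sys I E"
  shows "guarded_system I E"
proof
  fix i assume "i \<in> I"
  with assms(1) have "wt ob (vsys I E) (fst (E i)) (snd (E i))" by (simp add: sys_ok_def)
  from wt_imp_wf_pr[OF this]
  show "wf_pr (var_arity I E) (snd (E i))" "names_below (length (fst (E i))) (snd (E i))"
    by (simp_all add: var_arity_def[abs_def])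
  show "guarded (snd (E i))" using assms(2) \<open>i \<in> I\<close> by (simp add: guarded_sys_def)
qed

lemma abs_tuple_le_post_fp_pre_fp:
  assumes "sys_ok ob I E" "guarded_sys I E" "\<forall>i\<in>I. \<not> diverges (snd (synsol I E i))"
    and F: "post_fp ob I E F" and G: "pre_fp ob I E G"
  shows "abs_tuple_le I F G"
  unfolding abs_tuple_le_def abs_le_def
proof
  fix i assume i: "i \<in> I"
  interpret guarded_system I E using assms(1,2) by (rule guarded_system_if_sys_ok)
  have "wf_subst (var_arity I E) F" "wf_subst (var_arity I E) G"
    using F G unfolding post_fp_def pre_fp_def by (blast intro: wf_subst_closed_abs)+
  moreover have "tr_le (snd (F j)) (substV F (snd (E j)))" "tr_le (substV G (snd (E j))) (snd (G j))"
    if "j \<in> I" for j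
    using F G that by (simp_all add: post_fp_def pre_fp_def abs_le_def inst_def)
  ultimately have "tr_le (snd (F i)) (snd (G i))"
    using tr_le_post_fp_pre_fp i assms(3) by blast
  moreover have "fst (F i) = fst (G i)"
    using F G i by (simp add: post_fp_def pre_fp_def closed_abs_def)
  ultimately show "fst (F i) = fst (G i) \<and> tr_le (snd (F i)) (snd (G i))" by blast
qed

theorem theorem6p7:
  fixes ob :: "'s \<Rightarrow> 's list"
    and I I' :: "nat set"
    and E E' F G :: "nat \<Rightarrow> 's list \<times> 's pr"
  assumes sysE: "sys_ok ob I E"
    and sysE': "sys_ok ob I' E'"
    and ext: "extends_sys ob I E I' E'"
    and guard: "guarded_sys I' E'"
    and nodiv: "\<forall>i\<in>I'. \<not> diverges (snd (synsol I' E' i))"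
    and postF: "post_fp ob I E F"
    and preG: "pre_fp ob I E G"
  shows "abs_tuple_le I F G"
proof -
  from ext obtain J where J: "I' - J = I"
    and pre: "\<And>G. pre_fp ob I E G \<Longrightarrow> \<exists>G'. pre_fp ob I' E' G' \<and> (\<forall>i\<in>I. G' i = G i)"
    and post: "\<And>F. post_fp ob I E F \<Longrightarrow> \<exists>F'. post_fp ob I' E' F' \<and> (\<forall>i\<in>I. F' i = F i)"
    unfolding extends_sys_def by blast
  obtain F' where F': "post_fp ob I' E' F'" "\<forall>i\<in>I. F' i = F i" using post[OF postF] by blast
  obtain G' where G': "pre_fp ob I' E' G'" "\<forall>i\<in>I. G' i = G i" using pre[OF preG] by blast
  have "abs_tuple_le I' F' G'"
    by (rule abs_tuple_le_post_fp_pre_fp[OF sysE' guard nodiv F'(1) G'(1)])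
  with J F'(2) G'(2) show ?thesis by (auto simp: abs_tuple_le_def)
qed

end
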